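(* Let $n\in\{2,3\}$ and, for $r>0$, let $B(r)\subset\mathbb R^n$ denote the open ball of radius $r$ centred at the origin. Let $0<r_1<r_2<r_3$ and set \[ \alpha:=\frac{\log(r_3)-\log(r_2)}{\log(r_3)-\log(r_1)}\in(0,1). \] Then: (i) for every function $u$ harmonic in $B(r_3)$ (i.e. $\Delta u=0$ in $B(r_3)$) there holds \[ \|u\|_{L^2(B(r_2))}\le \|u\|_{L^2(B(r_1))}^{\alpha}\,\|u\|_{L^2(B(r_3))}^{1-\alpha}; \] (ii) the exponent $\alpha$ is optimal: there do not exist $\tilde\alpha>\alpha$ and a constant $C>0$ such that \[ \|u\|_{L^2(B(r_2))}\le C\,\|u\|_{L^2(B(r_1))}^{\tilde\alpha}\,\|u\|_{L^2(B(r_3))}^{1-\tilde\alpha} \] holds for all functions $u$ harmonic on $\mathbb R^n$.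
   Context: Equivalently $\alpha=\beta/(1+\beta)$ with $\beta=\frac{\log r_3-\log r_2}{\log r_2-\log r_1}$. Norms are standard $L^2$ norms on the indicated balls. *)

theory Defs
  imports "HOL-Analysis.Analysis"
begin

definition partial_deriv :: "('a::euclidean_space \<Rightarrow> real) \<Rightarrow> 'a \<Rightarrow> 'a \<Rightarrow> real" where
  "partial_deriv u b x = frechet_derivative u (at x) b"

definition laplacian :: "('a::euclidean_space \<Rightarrow> real) \<Rightarrow> 'a \<Rightarrow> real" where
  "laplacian u x = (\<Sum>b\<in>Basis. partial_deriv (partial_deriv u b) b x)"

definition harmonic_on :: "'a::euclidean_space set \<Rightarrow> ('a \<Rightarrow> real) \<Rightarrow> bool" where
  "harmonic_on S u \<longleftrightarrow>
     open S \<and> u differentiable_on S \<and>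
     (\<forall>b\<in>Basis. partial_deriv u b differentiable_on S) \<and>
     (\<forall>b\<in>Basis. \<forall>c\<in>Basis. continuous_on S (partial_deriv (partial_deriv u b) c)) \<and>
     (\<forall>x\<in>S. laplacian u x = 0)"

definition L2_ball :: "('a::euclidean_space \<Rightarrow> real) \<Rightarrow> real \<Rightarrow> real" where
  "L2_ball u r = sqrt (LINT x:ball 0 r|lborel. (u x)^2)"

end

theory Submission
  imports Defs
begin

text \<open>
  For u harmonic on B(r) and a radial cut-off \<phi> supported in the unit ball consider the pairing
  P(l, m) = \<integral> \<phi>(|x|^2) u(l x) u(m x) dx of two dilates of u.  Green's identity combined with
  \<Delta>u = 0 shows that P(c e^t, c e^-t) does not depend on t, i.e. P(l, m) = P(sqrt(l m), sqrt(l m)).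
  With the Cauchy-Schwarz inequality P(l, m)^2 \<le> P(l, l) P(m, m) this makes s \<mapsto> P(s, s)
  midpoint log-convex, hence log-convex, in log s.  After rescaling, s^n P(s, s) is the integral of
  u^2 against \<phi>(|y/s|^2), which tends to the squared L2 norm of u on B(s) as \<phi> tends to the
  indicator of the unit ball; the log-convexity survives the limit and is the three-ball inequality.
  Optimality is tested on the harmonic polynomials Re (x1 + i x2)^k, whose norms on B(s) are
  c_k s^(k + n/2): an exponent \<alpha>' > \<alpha> would bound (r2 / \<rho>)^k uniformly in k, where
  \<rho> = r1^\<alpha>' r3^(1 - \<alpha>') < r2.
\<close>

lemma power_double_le_of_square_le:
  fixes a b c X Y :: real
  assumes "a\<^sup>2 \<le> b * c" "0 \<le> b" "0 \<le> c" "b ^ N \<le> X" "c ^ N \<le> Y"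
  shows "a ^ (2 * N) \<le> X * Y"
proof -
  have "a ^ (2 * N) = (a\<^sup>2) ^ N" by (simp add: power_mult)
  also have "\<dots> \<le> (b * c) ^ N" using assms(1) by (simp add: power_mono)
  also have "\<dots> = b ^ N * c ^ N" by (simp add: power_mult_distrib)
  also have "\<dots> \<le> X * Y"
    using assms(2-5) order_trans[OF zero_le_power assms(4)] by (intro mult_mono) auto
  finally show ?thesis .
qed

lemma quadratic_nonneg_imp_discriminant_le:
  fixes a p c :: real
  assumes nonneg: "\<And>t. 0 \<le> a + 2 * t * p + t\<^sup>2 * c" and "0 \<le> c"
  shows "p\<^sup>2 \<le> a * c"
proof (cases "c = 0")
  case True
  have "p = 0"
  proof (rule ccontr)
    assume "p \<noteq> 0"
    have "0 \<le> a + 2 * (- (\<bar>a\<bar> + 1) / (2 * p)) * p + (- (\<bar>a\<bar> + 1) / (2 * p))\<^sup>2 * c"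
      by (rule nonneg)
    also have "\<dots> = a - (\<bar>a\<bar> + 1)" using \<open>p \<noteq> 0\<close> True by (simp add: field_simps)
    finally show False by linarith
  qed
  then show ?thesis using True by simp
next
  case False
  then have "0 < c" using \<open>0 \<le> c\<close> by simp
  have "0 \<le> a + 2 * (- p / c) * p + (- p / c)\<^sup>2 * c" by (rule nonneg)
  also have "\<dots> = a - p\<^sup>2 / c" using \<open>0 < c\<close> by (simp add: field_simps power2_eq_square)
  finally show ?thesis using \<open>0 < c\<close> by (simp add: divide_le_eq mult.commute)
qed

text \<open>The bounds on j are strict because \<open>0 powr 0 = 0\<close>.\<close>

lemma powr_interpolation_power:
  fixes a b :: real and j N :: nat
  assumes "0 \<le> a" "0 \<le> b" "0 < j" "j < N"
  shows "(a powr (1 - j / N) * b powr (j / N)) ^ N = a ^ (N - j) * b ^ j"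
proof (cases "a = 0 \<or> b = 0")
  case True
  then show ?thesis using assms by (auto simp: power_0_left)
next
  case False
  then have a: "0 < a" and b: "0 < b" using assms by auto
  have "(a powr (1 - j / N)) ^ N = a powr (real N * (1 - j / N))"
    using a by (simp add: powr_power)
  also have "real N * (1 - j / N) = real (N - j)"
    using assms by (simp add: of_nat_diff field_simps)
  finally have "(a powr (1 - j / N)) ^ N = a ^ (N - j)"
    using a by (simp add: powr_realpow)
  moreover have "(b powr (j / N)) ^ N = b ^ j"
    using b assms by (simp add: powr_power powr_realpow)
  ultimately show ?thesis by (simp add: power_mult_distrib)
qed

lemma powr_interpolation_scaled:
  fixes L a b :: real
  assumes "0 < L"
  shows "(L * a powr m) powr t * (L * b powr m) powr (1 - t) = L * (a powr t * b powr (1 - t)) powr m"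
proof -
  have split: "(L * c powr m) powr s = L powr s * (c powr s) powr m" for c s
  proof -
    have "(L * c powr m) powr s = L powr s * (c powr m) powr s"
      by (rule powr_mult)
    then show ?thesis by (simp only: powr_powr_swap[of c m s])
  qed
  have "L powr t * L powr (1 - t) = L"
    using assms by (simp flip: powr_add)
  moreover have "(a powr t) powr m * (b powr (1 - t)) powr m = (a powr t * b powr (1 - t)) powr m"
    by (rule powr_mult[symmetric])
  ultimately show ?thesis
    unfolding split by (metis mult.assoc mult.left_commute)
qed

lemma powr_log_interpolation:
  fixes r1 r2 r3 :: real
  assumes "0 < r1" "0 < r2" "0 < r3" "r1 \<noteq> r3"
  defines "\<alpha> \<equiv> (ln r3 - ln r2) / (ln r3 - ln r1)"
  shows "r1 powr \<alpha> * r3 powr (1 - \<alpha>) = r2"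
proof -
  have "ln r1 \<noteq> ln r3" using assms by simp
  then have "\<alpha> * (ln r3 - ln r1) = ln r3 - ln r2"
    by (simp add: \<alpha>_def)
  then have "\<alpha> * ln r1 + (1 - \<alpha>) * ln r3 = ln r2"
    by (simp add: algebra_simps)
  then show ?thesis
    using assms by (simp add: powr_def exp_add[symmetric] algebra_simps)
qed

lemma powr_log_interpolation_less:
  fixes r1 r2 r3 :: real
  assumes "0 < r1" "r1 < r2" "r2 < r3" and "(ln r3 - ln r2) / (ln r3 - ln r1) < \<alpha>"
  shows "r1 powr \<alpha> * r3 powr (1 - \<alpha>) < r2"
proof -
  have "ln r1 < ln r3" using assms by simp
  then have "ln r3 - ln r2 < \<alpha> * (ln r3 - ln r1)"
    using assms(4) by (simp add: divide_less_eq)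
  then have "\<alpha> * ln r1 + (1 - \<alpha>) * ln r3 < ln r2"
    by (simp add: algebra_simps)
  moreover have "r1 powr \<alpha> * r3 powr (1 - \<alpha>) = exp (\<alpha> * ln r1 + (1 - \<alpha>) * ln r3)"
    using assms by (simp add: powr_def exp_add mult.commute)
  ultimately show ?thesis
    using exp_less_mono[of _ "ln r2"] assms by fastforce
qed

section \<open>Midpoint log-convexity\<close>

lemma midpoint_log_convex_dyadic:
  fixes G :: "real \<Rightarrow> real" and j k :: nat
  assumes nonneg: "\<And>q. q \<in> {0..1} \<Longrightarrow> 0 \<le> G q"
    and midpoint: "\<And>p q. p \<in> {0..1} \<Longrightarrow> q \<in> {0..1} \<Longrightarrow> G ((p + q) / 2) ^ 2 \<le> G p * G q"
  shows "j \<le> 2 ^ k \<Longrightarrow> G (j / 2 ^ k) ^ 2 ^ k \<le> G 0 ^ (2 ^ k - j) * G 1 ^ j"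
proof (induction k arbitrary: j)
  case 0
  then have "j = 0 \<or> j = 1" by auto
  then show ?case by auto
next
  case (Suc k)
  define N :: nat where "N = 2 ^ k"
  \<comment> \<open>j / 2^(k+1) is the midpoint of i / 2^k and i' / 2^k, where i' is i or i + 1\<close>
  define i i' where "i = j div 2" and "i' = j - j div 2"
  have "i \<le> N" "i' \<le> N" "i + i' = j"
    using Suc.prems by (auto simp: i_def i'_def N_def)
  have in01: "h / N \<in> {0..1}" if "h \<le> N" for h :: nat
    using that by (auto simp: N_def)
  have "G (j / 2 ^ Suc k) ^ (2 * N) \<le> (G 0 ^ (N - i) * G 1 ^ i) * (G 0 ^ (N - i') * G 1 ^ i')"
  proof (rule power_double_le_of_square_le)
    have q: "j / 2 ^ Suc k = (i / N + i' / N) / 2"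
      using \<open>i + i' = j\<close> by (simp add: N_def field_simps flip: of_nat_add)
    show "G (j / 2 ^ Suc k) ^ 2 \<le> G (i / N) * G (i' / N)"
      unfolding q by (rule midpoint[OF in01[OF \<open>i \<le> N\<close>] in01[OF \<open>i' \<le> N\<close>]])
  qed (use Suc.IH[of i] Suc.IH[of i'] nonneg in01 \<open>i \<le> N\<close> \<open>i' \<le> N\<close> in \<open>auto simp: N_def\<close>)
  also have "\<dots> = G 0 ^ (2 ^ Suc k - j) * G 1 ^ j"
  proof -
    have "2 ^ Suc k - j = (N - i) + (N - i')"
      using \<open>i \<le> N\<close> \<open>i' \<le> N\<close> \<open>i + i' = j\<close> by (simp add: N_def)
    then show ?thesis
      unfolding \<open>i + i' = j\<close>[symmetric] by (simp only: power_add ac_simps)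
  qed
  finally show ?case by (simp add: N_def)
qed

lemma midpoint_log_convex_dyadic_powr:
  fixes G :: "real \<Rightarrow> real" and j k :: nat
  assumes nonneg: "\<And>q. q \<in> {0..1} \<Longrightarrow> 0 \<le> G q"
    and midpoint: "\<And>p q. p \<in> {0..1} \<Longrightarrow> q \<in> {0..1} \<Longrightarrow> G ((p + q) / 2) ^ 2 \<le> G p * G q"
    and "0 < j" "j < 2 ^ k"
  shows "G (j / 2 ^ k) \<le> G 0 powr (1 - j / 2 ^ k) * G 1 powr (j / 2 ^ k)"
proof -
  have le: "G (j / 2 ^ k) ^ 2 ^ k \<le> (G 0 powr (1 - j / 2 ^ k) * G 1 powr (j / 2 ^ k)) ^ 2 ^ k"
    using midpoint_log_convex_dyadic[OF nonneg midpoint, of j k] powr_interpolation_power[of "G 0" "G 1" j "2 ^ k"]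
      nonneg[of 0] nonneg[of 1] assms(3,4)
    by simp
  have "Suc (2 ^ k - 1) = 2 ^ k" by simp
  from power_le_imp_le_base[where n = "2 ^ k - 1", unfolded this, OF le] show ?thesis
    by simp
qed

lemma dyadic_approximation:
  fixes \<theta> :: real
  assumes \<theta>: "0 < \<theta>" "\<theta> < 1"
  obtains J :: "nat \<Rightarrow> nat"
  where "\<And>k. J k < 2 ^ k" "eventually (\<lambda>k. 0 < J k) sequentially" "(\<lambda>k. J k / 2 ^ k) \<longlonglongrightarrow> \<theta>"
proof
  define J where "J k = nat \<lfloor>\<theta> * 2 ^ k\<rfloor>" for k :: nat
  have J: "real (J k) \<le> \<theta> * 2 ^ k" "\<theta> * 2 ^ k < real (J k) + 1" for k
    using \<theta> by (simp_all add: J_def)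
  show "J k < 2 ^ k" for k
  proof -
    have "real (J k) < 2 ^ k" using J(1)[of k] \<theta> by (smt (verit) mult_less_cancel_right2 zero_less_power)
    then show ?thesis by (metis of_nat_less_iff of_nat_numeral of_nat_power)
  qed
  obtain k0 where k0: "1 / \<theta> < 2 ^ k0" using real_arch_pow[of 2 "1 / \<theta>"] by auto
  have "0 < J k" if "k0 \<le> k" for k
  proof -
    have "1 / \<theta> < 2 ^ k"
      using k0 power_increasing[OF that, of "2 :: real"] by linarith
    then have "1 \<le> \<theta> * 2 ^ k" using \<theta> by (simp add: divide_less_eq mult.commute)
    then show ?thesis using J(2)[of k] by linarith
  qed
  then show "eventually (\<lambda>k. 0 < J k) sequentially"
    by (auto simp: eventually_sequentially)
  show "(\<lambda>k. J k / 2 ^ k) \<longlonglongrightarrow> \<theta>"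
  proof (rule tendsto_sandwich[of "\<lambda>k. \<theta> - (1 / 2) ^ k" _ _ "\<lambda>_. \<theta>"])
    have "(\<theta> * 2 ^ k - 1) / 2 ^ k \<le> J k / 2 ^ k" for k
      using J(2)[of k] by (simp add: divide_right_mono)
    then show "eventually (\<lambda>k. \<theta> - (1 / 2) ^ k \<le> J k / 2 ^ k) sequentially"
      by (simp add: power_divide diff_divide_distrib)
    show "eventually (\<lambda>k. J k / 2 ^ k \<le> \<theta>) sequentially"
      using J(1) by (simp add: field_simps)
    show "(\<lambda>k. \<theta> - (1 / 2) ^ k) \<longlonglongrightarrow> \<theta>"
      using tendsto_diff[OF tendsto_const LIMSEQ_realpow_zero[of "1 / 2 :: real"]] by simp
  qed simp
qed

lemma midpoint_log_convex_imp_log_convex: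
  fixes G :: "real \<Rightarrow> real"
  assumes cont: "continuous_on {0..1} G"
    and nonneg: "\<And>q. q \<in> {0..1} \<Longrightarrow> 0 \<le> G q"
    and midpoint: "\<And>p q. p \<in> {0..1} \<Longrightarrow> q \<in> {0..1} \<Longrightarrow> G ((p + q) / 2) ^ 2 \<le> G p * G q"
    and \<theta>: "0 < \<theta>" "\<theta> < 1"
  shows "G \<theta> \<le> G 0 powr (1 - \<theta>) * G 1 powr \<theta>"
proof -
  obtain J :: "nat \<Rightarrow> nat" where J_less: "\<And>k. J k < 2 ^ k" and J_pos: "eventually (\<lambda>k. 0 < J k) sequentially"
    and q_lim: "(\<lambda>k. J k / 2 ^ k) \<longlonglongrightarrow> \<theta>"
    using dyadic_approximation[OF \<theta>] by blast
  from J_pos have "eventually (\<lambda>k. G (J k / 2 ^ k) \<le> G 0 powr (1 - J k / 2 ^ k) * G 1 powr (J k / 2 ^ k))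
      sequentially"
    by eventually_elim (rule midpoint_log_convex_dyadic_powr[OF nonneg midpoint _ J_less])
  moreover have "(\<lambda>k. G (J k / 2 ^ k)) \<longlonglongrightarrow> G \<theta>"
    using J_less \<theta> by (intro continuous_on_tendsto_compose[OF cont q_lim]) (auto simp: less_imp_le)
  moreover have "(\<lambda>k. G 0 powr (1 - J k / 2 ^ k) * G 1 powr (J k / 2 ^ k)) \<longlonglongrightarrow> G 0 powr (1 - \<theta>) * G 1 powr \<theta>"
    using \<theta> nonneg[of 0] nonneg[of 1]
    by (intro tendsto_mult tendsto_powr' tendsto_const tendsto_diff q_lim) auto
  ultimately show ?thesis
    by (intro tendsto_le[OF trivial_limit_sequentially]) auto
qed

lemma has_integral_UNIV_compact_support:
  fixes f :: "'a::euclidean_space \<Rightarrow> real"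
  assumes "continuous_on UNIV f" and "\<And>x. x \<notin> cball 0 R \<Longrightarrow> f x = 0"
    and "cball 0 R \<subseteq> cbox a b"
  shows "(f has_integral integral (cbox a b) f) UNIV"
proof (rule has_integral_on_superset[OF integrable_integral])
  show "f integrable_on cbox a b"
    using assms(1) by (auto intro: integrable_continuous continuous_on_subset)
  show "f x = 0" if "x \<notin> cbox a b" for x
    using that assms(2,3) by blast
qed auto

lemma has_integral_integral_compact_support:
  fixes f :: "'a::euclidean_space \<Rightarrow> real"
  assumes "continuous_on UNIV f" and "\<And>x. x \<notin> cball 0 R \<Longrightarrow> f x = 0"
  shows "(f has_integral integral UNIV f) UNIV"
proof -
  obtain a where "cball (0::'a) R \<subseteq> cbox (-a) a"
    using bounded_subset_cbox_symmetric[OF bounded_cball] by blast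
  from has_integral_UNIV_compact_support[OF assms this] show ?thesis
    by (simp add: integral_unique)
qed

lemma has_integral_affinity_compact_support:
  fixes f :: "'a::euclidean_space \<Rightarrow> real"
  assumes cont: "continuous_on UNIV f" and supp: "\<And>x. x \<notin> cball 0 R \<Longrightarrow> f x = 0"
    and "m \<noteq> 0"
  shows "((\<lambda>x. f (m *\<^sub>R x + c)) has_integral integral UNIV f / \<bar>m\<bar> ^ DIM('a)) UNIV"
proof -
  obtain a where box: "cball (0::'a) R \<subseteq> cbox (-a) a"
    using bounded_subset_cbox_symmetric[OF bounded_cball] by blast
  have "integral UNIV f = integral (cbox (-a) a) f"
    using has_integral_UNIV_compact_support[OF cont supp box] by (simp add: integral_unique)
  moreover have "f integrable_on cbox (-a) a"
    using cont by (auto intro: integrable_continuous continuous_on_subset)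
  ultimately have "(f has_integral integral UNIV f) (cbox (-a) a)"
    by (simp add: has_integral_integral)
  from has_integral_affinity[OF this \<open>m \<noteq> 0\<close>, of c]
  have "((\<lambda>x. f (m *\<^sub>R x + c)) has_integral integral UNIV f / \<bar>m\<bar> ^ DIM('a))
          ((\<lambda>x. (1 / m) *\<^sub>R x + - ((1 / m) *\<^sub>R c)) ` cbox (-a) a)"
    by (simp add: divide_inverse_commute)
  then show ?thesis
  proof (rule has_integral_on_superset)
    fix x assume x: "x \<notin> (\<lambda>x. (1 / m) *\<^sub>R x + - ((1 / m) *\<^sub>R c)) ` cbox (-a) a"
    have "x = (1 / m) *\<^sub>R (m *\<^sub>R x + c) + - ((1 / m) *\<^sub>R c)"
      using \<open>m \<noteq> 0\<close> by (simp add: algebra_simps)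
    with x have "m *\<^sub>R x + c \<notin> cbox (-a) a" by blast
    then show "f (m *\<^sub>R x + c) = 0" using box supp by blast
  qed auto
qed

lemma leibniz_rule_compact_support:
  fixes K K' :: "real \<Rightarrow> 'a::euclidean_space \<Rightarrow> real"
  assumes U: "convex U" "\<tau>0 \<in> U"
    and deriv: "\<And>\<tau> x. \<tau> \<in> U \<Longrightarrow> ((\<lambda>\<tau>. K \<tau> x) has_real_derivative K' \<tau> x) (at \<tau> within U)"
    and cont: "\<And>\<tau>. \<tau> \<in> U \<Longrightarrow> continuous_on UNIV (K \<tau>)"
    and cont': "continuous_on (U \<times> UNIV) (\<lambda>(\<tau>, x). K' \<tau> x)"
    and supp: "\<And>\<tau> x. \<tau> \<in> U \<Longrightarrow> x \<notin> cball 0 R \<Longrightarrow> K \<tau> x = 0"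
    and supp': "\<And>\<tau> x. \<tau> \<in> U \<Longrightarrow> x \<notin> cball 0 R \<Longrightarrow> K' \<tau> x = 0"
  shows "((\<lambda>\<tau>. integral UNIV (K \<tau>)) has_real_derivative integral UNIV (K' \<tau>0)) (at \<tau>0 within U)"
proof -
  obtain a where box: "cball (0::'a) R \<subseteq> cbox (-a) a"
    using bounded_subset_cbox_symmetric[OF bounded_cball] by blast
  have eq: "integral UNIV (K \<tau>) = integral (cbox (-a) a) (K \<tau>)" if "\<tau> \<in> U" for \<tau>
    using has_integral_UNIV_compact_support[OF cont supp box] that by (simp add: integral_unique)
  have "continuous_on UNIV (\<lambda>x. (\<lambda>(\<tau>, x). K' \<tau> x) (\<tau>0, x))"
    by (rule continuous_on_compose2[OF cont']) (use U in \<open>auto intro!: continuous_intros\<close>)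
  then have eq': "integral UNIV (K' \<tau>0) = integral (cbox (-a) a) (K' \<tau>0)"
    using has_integral_UNIV_compact_support[OF _ supp' box] U by (simp add: integral_unique)
  have "((\<lambda>\<tau>. integral (cbox (-a) a) (K \<tau>)) has_real_derivative integral (cbox (-a) a) (K' \<tau>0))
          (at \<tau>0 within U)"
  proof (rule leibniz_rule_field_derivative[OF deriv _ _ U(2,1)])
    show "K \<tau> integrable_on cbox (-a) a" if "\<tau> \<in> U" for \<tau>
      using cont[OF that] by (auto intro: integrable_continuous continuous_on_subset)
    show "continuous_on (U \<times> cbox (-a) a) (\<lambda>(\<tau>, x). K' \<tau> x)"
      by (rule continuous_on_subset[OF cont']) auto
  qed
  then show ?thesis
    unfolding eq' by (rule has_field_derivative_transform_within[OF _ zero_less_one U(2)]) (simp add: eq)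
qed

lemma integral_directional_derivative_eq_0:
  fixes G g :: "'a::euclidean_space \<Rightarrow> real"
  assumes deriv: "\<And>x. ((\<lambda>t. G (x + t *\<^sub>R v)) has_real_derivative g x) (at 0)"
    and cont: "continuous_on UNIV G" "continuous_on UNIV g"
    and supp: "\<And>x. x \<notin> cball 0 R \<Longrightarrow> G x = 0" "\<And>x. x \<notin> cball 0 R \<Longrightarrow> g x = 0"
  shows "integral UNIV g = 0"
proof -
  define U where "U = {-1<..<1::real}"
  have U: "open U" "convex U" "0 \<in> U" by (auto simp: U_def)
  have shifted: "x + t *\<^sub>R v \<notin> cball 0 R" if "t \<in> U" "x \<notin> cball 0 (R + norm v)" for t x
  proof -
    have "norm (t *\<^sub>R v) \<le> norm v"
      using \<open>t \<in> U\<close> by (auto simp: U_def intro: mult_left_le_one_le)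
    then show ?thesis
      using that(2) norm_triangle_ineq2[of x "- (t *\<^sub>R v)"] by auto
  qed
  have "((\<lambda>t. integral UNIV (\<lambda>x. G (x + t *\<^sub>R v))) has_real_derivative
          integral UNIV (\<lambda>x. g (x + 0 *\<^sub>R v))) (at 0 within U)"
  proof (rule leibniz_rule_compact_support[OF U(2,3), where R = "R + norm v"])
    show "((\<lambda>t. G (x + t *\<^sub>R v)) has_real_derivative g (x + t *\<^sub>R v)) (at t within U)" for t x
    proof -
      have "((\<lambda>s. G (x + (s + t) *\<^sub>R v)) has_real_derivative g (x + t *\<^sub>R v)) (at 0)"
        using deriv[of "x + t *\<^sub>R v"] by (simp add: algebra_simps scaleR_add_left)
      then have "((\<lambda>t. G (x + t *\<^sub>R v)) has_real_derivative g (x + t *\<^sub>R v)) (at (0 + t))"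
        using DERIV_shift[where f = "\<lambda>t. G (x + t *\<^sub>R v)"] by blast
      then show ?thesis by (simp add: has_field_derivative_at_within)
    qed
    show "continuous_on UNIV (\<lambda>x. G (x + t *\<^sub>R v))" for t
      by (rule continuous_on_compose2[OF cont(1)]) (auto intro!: continuous_intros)
    show "continuous_on (U \<times> UNIV) (\<lambda>(t, x). g (x + t *\<^sub>R v))"
      unfolding split_beta
      by (rule continuous_on_compose2[OF cont(2)]) (auto intro!: continuous_intros)
  qed (use shifted supp in auto)
  moreover have "integral UNIV (\<lambda>x. G (x + t *\<^sub>R v)) = integral UNIV G" for t
    using has_integral_affinity_compact_support[OF cont(1) supp(1), where m = 1 and c = "t *\<^sub>R v"]
    by (simp add: integral_unique)
  ultimately have "((\<lambda>t. integral UNIV G) has_real_derivative integral UNIV g) (at 0)"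
    using at_within_open[OF U(3,1)] by simp
  then show ?thesis
    using DERIV_unique DERIV_const by blast
qed

lemma scaleR_in_ball:
  fixes x :: "'a::real_normed_vector"
  assumes "x \<in> ball 0 1" "\<bar>t\<bar> \<le> r" "0 < r"
  shows "t *\<^sub>R x \<in> ball 0 r"
proof -
  have "norm (t *\<^sub>R x) \<le> r * norm x"
    using assms(2) by (simp add: mult_right_mono)
  also have "\<dots> < r" using assms(1,3) by simp
  finally show ?thesis by simp
qed

lemma inner_self_gt_if_notin_ball:
  fixes x :: "'a::real_inner"
  assumes "x \<notin> ball 0 1" "B < 1"
  shows "B < x \<bullet> x"
proof -
  have "1 \<le> norm x ^ 2" using assms(1) by (simp add: one_le_power)
  then show ?thesis using assms(2) by (simp add: power2_norm_eq_inner)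
qed

lemma ball_Un_inner_self_gt:
  assumes "B < 1"
  shows "ball 0 1 \<union> {x::'a::real_inner. B < x \<bullet> x} = UNIV"
  using inner_self_gt_if_notin_ball[OF _ assms] by blast

lemma continuous_on_UNIV_if_supported_in_ball:
  fixes f :: "'a::euclidean_space \<Rightarrow> real"
  assumes "continuous_on (ball 0 1) f" and "\<And>x. B < x \<bullet> x \<Longrightarrow> f x = 0" and "B < 1"
  shows "continuous_on UNIV f"
proof -
  have "open {x::'a. B < x \<bullet> x}"
    by (rule open_Collect_less) (auto intro!: continuous_intros)
  moreover have "continuous_on {x::'a. B < x \<bullet> x} f"
    by (rule continuous_on_eq[OF continuous_on_const[of _ 0]]) (use assms(2) in auto)
  ultimately have "continuous_on (ball 0 1 \<union> {x::'a. B < x \<bullet> x}) f"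
    by (rule continuous_on_open_Un[OF open_ball _ assms(1)])
  then show ?thesis
    by (simp only: ball_Un_inner_self_gt[OF assms(3)])
qed

lemma continuous_on_Times_UNIV_if_supported_in_ball:
  fixes f :: "real \<times> 'a::euclidean_space \<Rightarrow> real"
  assumes "continuous_on (U \<times> ball 0 1) f" and "\<And>t x. t \<in> U \<Longrightarrow> B < x \<bullet> x \<Longrightarrow> f (t, x) = 0"
    and "B < 1"
  shows "continuous_on (U \<times> UNIV) f"
proof -
  have "open {x::'a. B < x \<bullet> x}"
    by (rule open_Collect_less) (auto intro!: continuous_intros)
  then have "openin (top_of_set (U \<times> UNIV)) (U \<times> {x::'a. B < x \<bullet> x})"
    by (intro openin_Times openin_subtopology_self) auto
  moreover have "openin (top_of_set (U \<times> UNIV)) (U \<times> ball (0::'a) 1)"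
    by (intro openin_Times openin_subtopology_self) auto
  moreover have "continuous_on (U \<times> {x::'a. B < x \<bullet> x}) f"
    by (rule continuous_on_eq[OF continuous_on_const[of _ 0]]) (use assms(2) in auto)
  ultimately show ?thesis
    using continuous_on_Un_local_open[of "U \<times> ball 0 1" "U \<times> {x::'a. B < x \<bullet> x}" f] assms(1)
    by (simp add: Sigma_Un_distrib2[symmetric] ball_Un_inner_self_gt[OF assms(3)])
qed

lemma continuous_on_compose_scaleR_ball:
  fixes f :: "'a::real_normed_vector \<Rightarrow> real"
  assumes "continuous_on (ball 0 r) f" "0 < r"
    and "continuous_on U h" "\<And>\<tau>. \<tau> \<in> U \<Longrightarrow> \<bar>h \<tau>\<bar> \<le> r"
  shows "continuous_on (U \<times> ball 0 1) (\<lambda>p. f (h (fst p) *\<^sub>R snd p))"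
proof (rule continuous_on_compose2[OF assms(1)])
  have "continuous_on (U \<times> ball (0::'a) 1) (\<lambda>p. h (fst p))"
    by (rule continuous_on_compose2[OF assms(3) continuous_on_fst]) auto
  then show "continuous_on (U \<times> ball (0::'a) 1) (\<lambda>p. h (fst p) *\<^sub>R snd p)"
    by (intro continuous_intros)
  show "(\<lambda>p. h (fst p) *\<^sub>R snd p) ` (U \<times> ball (0::'a) 1) \<subseteq> ball 0 r"
  proof -
    have "h \<tau> *\<^sub>R x \<in> ball 0 r" if "\<tau> \<in> U" "x \<in> ball (0::'a) 1" for \<tau> x
      using scaleR_in_ball[OF that(2) assms(4)[OF that(1)] assms(2)] .
    then show ?thesis by auto
  qed
qed

lemma continuous_on_compose_scaleR_ball':
  fixes f :: "'a::real_normed_vector \<Rightarrow> real"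
  assumes "continuous_on (ball 0 r) f" "0 < r" "\<bar>k\<bar> \<le> r"
  shows "continuous_on (ball 0 1) (\<lambda>x. f (k *\<^sub>R x))"
proof (rule continuous_on_compose2[OF assms(1)])
  show "continuous_on (ball 0 1) (\<lambda>x::'a. k *\<^sub>R x)"
    by (intro continuous_intros)
  show "(\<lambda>x::'a. k *\<^sub>R x) ` ball 0 1 \<subseteq> ball 0 r"
    by (rule image_subsetI) (erule scaleR_in_ball[OF _ assms(3,2)])
qed

definition directional_deriv :: "('a::euclidean_space \<Rightarrow> real) \<Rightarrow> 'a \<Rightarrow> 'a \<Rightarrow> real" where
  "directional_deriv u y h = (\<Sum>b\<in>Basis. (h \<bullet> b) * partial_deriv u b y)"

lemma frechet_derivative_eq_directional_deriv:
  assumes "u differentiable (at y)"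
  shows "frechet_derivative u (at y) h = directional_deriv u y h"
proof -
  have "linear (frechet_derivative u (at y))"
    using assms by (rule linear_frechet_derivative)
  then have "frechet_derivative u (at y) (\<Sum>b\<in>Basis. (h \<bullet> b) *\<^sub>R b)
      = (\<Sum>b\<in>Basis. (h \<bullet> b) * frechet_derivative u (at y) b)"
    by (simp add: linear_sum linear_cmul)
  then show ?thesis
    by (simp add: euclidean_representation directional_deriv_def partial_deriv_def)
qed

lemma has_real_derivative_compose_frechet:
  fixes f :: "'a::euclidean_space \<Rightarrow> real"
  assumes "f differentiable (at (g t))" and "(g has_vector_derivative g') (at t within T)"
  shows "((\<lambda>t. f (g t)) has_real_derivative frechet_derivative f (at (g t)) g') (at t within T)"
proof -
  have "(f has_derivative frechet_derivative f (at (g t))) (at (g t))"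
    using assms(1) frechet_derivative_works by blast
  from diff_chain_within[OF assms(2)[unfolded has_vector_derivative_def] has_derivative_at_withinI[OF this]]
  have "((\<lambda>t. f (g t)) has_derivative (\<lambda>s. frechet_derivative f (at (g t)) (s *\<^sub>R g'))) (at t within T)"
    by (simp add: o_def)
  moreover have "linear (frechet_derivative f (at (g t)))"
    using assms(1) by (rule linear_frechet_derivative)
  ultimately show ?thesis
    by (simp add: has_field_derivative_def linear_cmul mult_commute_abs)
qed

lemma has_real_derivative_compose_scaleR:
  fixes u :: "'a::euclidean_space \<Rightarrow> real"
  assumes diff: "u differentiable (at (h \<tau> *\<^sub>R x))" and "(h has_real_derivative h') (at \<tau> within U)"
  shows "((\<lambda>\<tau>. u (h \<tau> *\<^sub>R x)) has_real_derivative h' * directional_deriv u (h \<tau> *\<^sub>R x) x) (at \<tau> within U)"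
proof -
  have "((\<lambda>\<tau>. h \<tau> *\<^sub>R x) has_vector_derivative h' *\<^sub>R x) (at \<tau> within U)"
    using has_vector_derivative_scaleR[OF assms(2) has_vector_derivative_const[of x]] by simp
  from has_real_derivative_compose_frechet[where g = "\<lambda>\<tau>. h \<tau> *\<^sub>R x", OF diff this]
  show ?thesis
    by (simp add: frechet_derivative_eq_directional_deriv[OF diff] directional_deriv_def
        sum_distrib_left algebra_simps)
qed

lemma has_real_derivative_compose_scaled_line:
  fixes f :: "'a::euclidean_space \<Rightarrow> real"
  assumes "f differentiable (at (k *\<^sub>R x))"
  shows "((\<lambda>t. f (k *\<^sub>R (x + t *\<^sub>R e))) has_real_derivative k * frechet_derivative f (at (k *\<^sub>R x)) e) (at 0)"
proof -
  have "((\<lambda>t. k *\<^sub>R (x + t *\<^sub>R e)) has_vector_derivative k *\<^sub>R e) (at 0)"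
    by (auto intro!: derivative_eq_intros)
  moreover have "f differentiable (at ((\<lambda>t. k *\<^sub>R (x + t *\<^sub>R e)) 0))"
    using assms by simp
  ultimately have "((\<lambda>t. f (k *\<^sub>R (x + t *\<^sub>R e))) has_real_derivative
      frechet_derivative f (at (k *\<^sub>R x)) (k *\<^sub>R e)) (at 0)"
    using has_real_derivative_compose_frechet by fastforce
  then show ?thesis
    using linear_frechet_derivative[OF assms] by (simp add: linear_cmul)
qed

lemma harmonic_onD:
  assumes "harmonic_on S u"
  shows "u differentiable_on S" "\<And>b. b \<in> Basis \<Longrightarrow> partial_deriv u b differentiable_on S"
    "continuous_on S u" "\<And>b. b \<in> Basis \<Longrightarrow> continuous_on S (partial_deriv u b)"
    "\<And>b. b \<in> Basis \<Longrightarrow> continuous_on S (partial_deriv (partial_deriv u b) b)"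
    "\<And>y. y \<in> S \<Longrightarrow> (\<Sum>b\<in>Basis. partial_deriv (partial_deriv u b) b y) = 0"
  using assms unfolding harmonic_on_def laplacian_def by (auto simp: differentiable_imp_continuous_on)

context
  fixes u :: "'a::euclidean_space \<Rightarrow> real" and w :: "real \<Rightarrow> real" and r B :: real
    and U :: "real set" and a a' b b' :: "real \<Rightarrow> real"
  assumes u: "u differentiable_on ball 0 r" "\<And>e. e \<in> Basis \<Longrightarrow> continuous_on (ball 0 r) (partial_deriv u e)"
    and r: "0 < r"
    and w: "continuous_on UNIV w" "\<And>s. B \<le> s \<Longrightarrow> w s = 0" "B < 1"
    and a: "\<And>\<tau>. \<tau> \<in> U \<Longrightarrow> (a has_real_derivative a' \<tau>) (at \<tau> within U)"
      "continuous_on U a'" "\<And>\<tau>. \<tau> \<in> U \<Longrightarrow> \<bar>a \<tau>\<bar> \<le> r"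
    and b: "\<And>\<tau>. \<tau> \<in> U \<Longrightarrow> (b has_real_derivative b' \<tau>) (at \<tau> within U)"
      "continuous_on U b'" "\<And>\<tau>. \<tau> \<in> U \<Longrightarrow> \<bar>b \<tau>\<bar> \<le> r"
begin

lemma pairing_weight_vanishing: "B < x \<bullet> x \<Longrightarrow> w (x \<bullet> x) = 0"
  using w(2) by simp

lemma continuous_on_weighted_pairing_integrand:
  shows "\<tau> \<in> U \<Longrightarrow> continuous_on UNIV (\<lambda>x. w (x \<bullet> x) * u (a \<tau> *\<^sub>R x) * u (b \<tau> *\<^sub>R x))"
    and "continuous_on (U \<times> UNIV) (\<lambda>(\<tau>, x). w (x \<bullet> x) *
      (a' \<tau> * directional_deriv u (a \<tau> *\<^sub>R x) x * u (b \<tau> *\<^sub>R x)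
       + u (a \<tau> *\<^sub>R x) * (b' \<tau> * directional_deriv u (b \<tau> *\<^sub>R x) x)))"
proof -
  have a_cont: "continuous_on U a" and b_cont: "continuous_on U b"
    using a(1) b(1) by (meson DERIV_continuous continuous_on_eq_continuous_within)+
  have cu: "continuous_on (U \<times> ball 0 1) (\<lambda>p. u (h (fst p) *\<^sub>R snd p))"
    if "continuous_on U h" "\<And>\<tau>. \<tau> \<in> U \<Longrightarrow> \<bar>h \<tau>\<bar> \<le> r" for h
    using continuous_on_compose_scaleR_ball[OF differentiable_imp_continuous_on[OF u(1)] r that] .
  have cd: "continuous_on (U \<times> ball 0 1) (\<lambda>p. directional_deriv u (h (fst p) *\<^sub>R snd p) (snd p))"
    if "continuous_on U h" "\<And>\<tau>. \<tau> \<in> U \<Longrightarrow> \<bar>h \<tau>\<bar> \<le> r" for h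
    unfolding directional_deriv_def
    by (intro continuous_intros continuous_on_compose_scaleR_ball[OF u(2) r that])
  have cfst: "continuous_on (U \<times> ball (0::'a) 1) (\<lambda>p. h (fst p))" if "continuous_on U h" for h
    by (rule continuous_on_compose2[OF that continuous_on_fst]) auto
  have cw: "continuous_on (U \<times> ball (0::'a) 1) (\<lambda>p. w (snd p \<bullet> snd p))"
    by (rule continuous_on_compose2[OF w(1)]) (auto intro!: continuous_intros)
  show "continuous_on (U \<times> UNIV) (\<lambda>(\<tau>, x). w (x \<bullet> x) *
      (a' \<tau> * directional_deriv u (a \<tau> *\<^sub>R x) x * u (b \<tau> *\<^sub>R x)
       + u (a \<tau> *\<^sub>R x) * (b' \<tau> * directional_deriv u (b \<tau> *\<^sub>R x) x)))"
  proof (rule continuous_on_Times_UNIV_if_supported_in_ball[OF _ _ w(3)])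
    show "continuous_on (U \<times> ball 0 1) (\<lambda>(\<tau>, x). w (x \<bullet> x) *
        (a' \<tau> * directional_deriv u (a \<tau> *\<^sub>R x) x * u (b \<tau> *\<^sub>R x)
         + u (a \<tau> *\<^sub>R x) * (b' \<tau> * directional_deriv u (b \<tau> *\<^sub>R x) x)))"
      unfolding split_beta by (intro continuous_intros cw cfst a(2) b(2) cu cd a_cont b_cont a(3) b(3))
  qed (use pairing_weight_vanishing in auto)
  show "continuous_on UNIV (\<lambda>x. w (x \<bullet> x) * u (a \<tau> *\<^sub>R x) * u (b \<tau> *\<^sub>R x))" if "\<tau> \<in> U"
  proof (rule continuous_on_UNIV_if_supported_in_ball[OF _ _ w(3)])
    have "continuous_on (U \<times> ball 0 1) (\<lambda>p. w (snd p \<bullet> snd p) * u (a (fst p) *\<^sub>R snd p) * u (b (fst p) *\<^sub>R snd p))"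
      by (intro continuous_intros cw cu a_cont b_cont a(3) b(3))
    moreover have "continuous_on (ball (0::'a) 1) (\<lambda>x. (\<tau>, x))"
      by (intro continuous_intros)
    ultimately show "continuous_on (ball 0 1) (\<lambda>x. w (x \<bullet> x) * u (a \<tau> *\<^sub>R x) * u (b \<tau> *\<^sub>R x))"
      using continuous_on_compose2 that by fastforce
  qed (simp add: pairing_weight_vanishing)
qed

lemma has_real_derivative_weighted_pairing_integrand:
  assumes "\<tau> \<in> U"
  shows "((\<lambda>\<tau>. w (x \<bullet> x) * u (a \<tau> *\<^sub>R x) * u (b \<tau> *\<^sub>R x)) has_real_derivative
    w (x \<bullet> x) * (a' \<tau> * directional_deriv u (a \<tau> *\<^sub>R x) x * u (b \<tau> *\<^sub>R x)
      + u (a \<tau> *\<^sub>R x) * (b' \<tau> * directional_deriv u (b \<tau> *\<^sub>R x) x))) (at \<tau> within U)"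
proof (cases "x \<in> ball 0 1")
  case True
  have du: "((\<lambda>\<tau>. u (h \<tau> *\<^sub>R x)) has_real_derivative h' \<tau> * directional_deriv u (h \<tau> *\<^sub>R x) x)
      (at \<tau> within U)"
    if "(h has_real_derivative h' \<tau>) (at \<tau> within U)" "\<bar>h \<tau>\<bar> \<le> r" for h h'
    using u(1) scaleR_in_ball[OF True that(2) r]
    by (intro has_real_derivative_compose_scaleR that(1)) (simp add: differentiable_on_eq_differentiable_at)
  from DERIV_mult[OF DERIV_cmult[OF du[of a a', OF a(1,3)[OF assms]], of "w (x \<bullet> x)"]
      du[of b b', OF b(1,3)[OF assms]]]
  show ?thesis
    by (rule DERIV_cong) (simp add: algebra_simps)
next
  case False
  then have "w (x \<bullet> x) = 0"
    using pairing_weight_vanishing inner_self_gt_if_notin_ball[OF False w(3)] by simp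
  then show ?thesis by simp
qed

lemma has_real_derivative_weighted_pairing:
  assumes "convex U" "\<tau>0 \<in> U"
  shows "((\<lambda>\<tau>. integral UNIV (\<lambda>x. w (x \<bullet> x) * u (a \<tau> *\<^sub>R x) * u (b \<tau> *\<^sub>R x))) has_real_derivative
     integral UNIV (\<lambda>x. w (x \<bullet> x) * (a' \<tau>0 * directional_deriv u (a \<tau>0 *\<^sub>R x) x * u (b \<tau>0 *\<^sub>R x)
        + u (a \<tau>0 *\<^sub>R x) * (b' \<tau>0 * directional_deriv u (b \<tau>0 *\<^sub>R x) x)))) (at \<tau>0 within U)"
proof -
  have "w (x \<bullet> x) = 0" if "x \<notin> cball 0 1" for x :: 'a
    using that by (intro pairing_weight_vanishing inner_self_gt_if_notin_ball[OF _ w(3)]) auto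
  then show ?thesis
    by (intro leibniz_rule_compact_support[OF assms has_real_derivative_weighted_pairing_integrand
          continuous_on_weighted_pairing_integrand, where R = 1]) auto
qed

end

section \<open>A cut-off function and Green's identity\<close>

definition ramp :: "real \<Rightarrow> real \<Rightarrow> real \<Rightarrow> real" where
  "ramp A B s = max 0 (min 1 ((B - s) / (B - A)))"

text \<open>The factor 1/2 and the lower limit -1 (any value below \<open>x \<bullet> x \<ge> 0\<close> would do) are chosen so
  that \<open>ramp_primitive A B (x \<bullet> x)\<close> has derivative \<open>ramp A B (x \<bullet> x) * (x \<bullet> e)\<close> along e.\<close>

definition ramp_primitive :: "real \<Rightarrow> real \<Rightarrow> real \<Rightarrow> real" where
  "ramp_primitive A B s = (integral {-1..s} (ramp A B) - integral {-1..B} (ramp A B)) / 2"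

lemma continuous_on_ramp: "continuous_on S (ramp A B)"
  unfolding ramp_def divide_inverse by (intro continuous_intros)

lemma ramp_eq_0: "A < B \<Longrightarrow> B \<le> s \<Longrightarrow> ramp A B s = 0"
  unfolding ramp_def by (auto simp: divide_nonpos_pos)

lemma ramp_eq_1: "A < B \<Longrightarrow> s \<le> A \<Longrightarrow> ramp A B s = 1"
  unfolding ramp_def by (auto simp: field_simps)

lemma ramp_nonneg: "0 \<le> ramp A B s"
  and ramp_le_1: "ramp A B s \<le> 1"
  unfolding ramp_def by auto

lemma ramp_eventually_eq_1:
  assumes "A \<longlonglongrightarrow> 1" "\<And>k. A k < B k" "t < 1"
  shows "eventually (\<lambda>k. ramp (A k) (B k) t = 1) sequentially"
  using order_tendstoD(1)[OF assms(1) assms(3)]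
  by eventually_elim (simp add: ramp_eq_1[OF assms(2)])

lemma ramp_rescaled_eq_0:
  fixes y :: "'a::real_inner"
  assumes "y \<notin> ball 0 s" "0 < s" "A < B" "B < 1"
  shows "ramp A B ((y /\<^sub>R s) \<bullet> (y /\<^sub>R s)) = 0"
proof -
  have "y /\<^sub>R s \<notin> ball 0 1"
    using assms(1,2) by (simp add: divide_simps)
  from inner_self_gt_if_notin_ball[OF this assms(4)] show ?thesis
    by (rule ramp_eq_0[OF assms(3) less_imp_le])
qed

lemma ramp_rescaled_tendsto_indicator:
  fixes y :: "'a::real_inner"
  assumes "0 < s" "\<And>k. A k < B k" "\<And>k. B k < 1" "A \<longlonglongrightarrow> 1"
  shows "(\<lambda>k. ramp (A k) (B k) ((y /\<^sub>R s) \<bullet> (y /\<^sub>R s))) \<longlonglongrightarrow> indicator (ball 0 s) y"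
proof (cases "y \<in> ball 0 s")
  case True
  then have "(y /\<^sub>R s) \<bullet> (y /\<^sub>R s) < 1"
    using assms(1) by (simp add: dot_square_norm divide_simps power_strict_mono)
  from ramp_eventually_eq_1[OF assms(4,2) this] True show ?thesis
    by (simp add: tendsto_eventually)
next
  case False
  then show ?thesis
    using ramp_rescaled_eq_0[OF False assms(1) assms(2,3)] by simp
qed

lemma ramp_primitive_has_real_derivative:
  assumes "-1 < s"
  shows "(ramp_primitive A B has_real_derivative ramp A B s / 2) (at s)"
proof -
  have "((\<lambda>t. integral {-1..t} (ramp A B)) has_real_derivative ramp A B s) (at s within {-1..s+1})"
    by (rule integral_has_real_derivative) (use assms in \<open>auto intro: continuous_on_ramp\<close>)
  then have "((\<lambda>t. integral {-1..t} (ramp A B)) has_real_derivative ramp A B s) (at s)"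
    using at_within_Icc_at[of "-1" s "s+1"] assms by simp
  from DERIV_cdivide[OF DERIV_diff[OF this DERIV_const[of "integral {-1..B} (ramp A B)"]], of 2]
  show ?thesis
    by (simp add: ramp_primitive_def[abs_def])
qed

lemma continuous_on_ramp_primitive: "continuous_on {-1<..} (ramp_primitive A B)"
  using ramp_primitive_has_real_derivative
  by (meson DERIV_isCont continuous_at_imp_continuous_on greaterThan_iff)

lemma ramp_primitive_eq_0:
  assumes "A < B" "-1 \<le> B" "B \<le> s"
  shows "ramp_primitive A B s = 0"
proof -
  have int: "ramp A B integrable_on {-1..s}"
    by (rule integrable_continuous_real) (rule continuous_on_ramp)
  have "integral {-1..B} (ramp A B) + integral {B..s} (ramp A B) = integral {-1..s} (ramp A B)"
    using Henstock_Kurzweil_Integration.integral_combine[OF _ _ int, of B] assms by linarith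
  moreover have "integral {B..s} (ramp A B) = integral {B..s} (\<lambda>_. 0)"
    by (rule integral_cong) (use assms ramp_eq_0 in auto)
  ultimately show ?thesis by (simp add: ramp_primitive_def)
qed

lemma has_real_derivative_ramp_primitive_line:
  fixes x e :: "'a::euclidean_space"
  shows "((\<lambda>t. ramp_primitive A B ((x + t *\<^sub>R e) \<bullet> (x + t *\<^sub>R e))) has_real_derivative
           ramp A B (x \<bullet> x) * (x \<bullet> e)) (at 0)"
proof -
  have "(\<lambda>t. (x + t *\<^sub>R e) \<bullet> (x + t *\<^sub>R e)) = (\<lambda>t. x \<bullet> x + t * (2 * (x \<bullet> e)) + t\<^sup>2 * (e \<bullet> e))"
    by (auto simp: fun_eq_iff inner_add_left inner_add_right power2_eq_square algebra_simps inner_commute)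
  moreover have "((\<lambda>t. x \<bullet> x + t * (2 * (x \<bullet> e)) + t\<^sup>2 * (e \<bullet> e)) has_real_derivative 2 * (x \<bullet> e)) (at 0)"
    by (auto intro!: derivative_eq_intros)
  ultimately have "((\<lambda>t. (x + t *\<^sub>R e) \<bullet> (x + t *\<^sub>R e)) has_real_derivative 2 * (x \<bullet> e)) (at 0)"
    by simp
  moreover have "-1 < x \<bullet> x"
    using inner_ge_zero[of x] by linarith
  then have "(ramp_primitive A B has_real_derivative ramp A B (x \<bullet> x) / 2)
      (at ((x + 0 *\<^sub>R e) \<bullet> (x + 0 *\<^sub>R e)))"
    using ramp_primitive_has_real_derivative by simp
  ultimately show ?thesis
    using DERIV_chain2 by fastforce
qed

definition scaled_wronskian :: "('a::euclidean_space \<Rightarrow> real) \<Rightarrow> real \<Rightarrow> real \<Rightarrow> 'a \<Rightarrow> 'a \<Rightarrow> real" where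
  "scaled_wronskian u l m e x =
     l * partial_deriv u e (l *\<^sub>R x) * u (m *\<^sub>R x) - m * u (l *\<^sub>R x) * partial_deriv u e (m *\<^sub>R x)"

lemma has_real_derivative_scaled_wronskian:
  assumes "u differentiable (at (l *\<^sub>R x))" "partial_deriv u e differentiable (at (l *\<^sub>R x))"
    and "u differentiable (at (m *\<^sub>R x))" "partial_deriv u e differentiable (at (m *\<^sub>R x))"
  shows "((\<lambda>t. scaled_wronskian u l m e (x + t *\<^sub>R e)) has_real_derivative
      l\<^sup>2 * partial_deriv (partial_deriv u e) e (l *\<^sub>R x) * u (m *\<^sub>R x)
      - m\<^sup>2 * u (l *\<^sub>R x) * partial_deriv (partial_deriv u e) e (m *\<^sub>R x)) (at 0)"
proof -
  note line = has_real_derivative_compose_scaled_line[unfolded partial_deriv_def[symmetric], of _ _ x e]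
  from DERIV_diff[OF DERIV_mult[OF DERIV_cmult[OF line[OF assms(2)], of l] line[OF assms(3)]]
                     DERIV_mult[OF DERIV_cmult[OF line[OF assms(1)], of m] line[OF assms(4)]]]
  show ?thesis
    unfolding scaled_wronskian_def
    by (rule DERIV_cong) (simp add: power2_eq_square algebra_simps)
qed

lemma sum_Basis_scaled_wronskian:
  "(\<Sum>e\<in>Basis. (x \<bullet> e) * scaled_wronskian u l m e x) =
     l * directional_deriv u (l *\<^sub>R x) x * u (m *\<^sub>R x) - m * u (l *\<^sub>R x) * directional_deriv u (m *\<^sub>R x) x"
  unfolding scaled_wronskian_def directional_deriv_def
  by (simp add: sum_distrib_left sum_distrib_right sum_subtractf algebra_simps)

text \<open>For fixed l and m the functions \<open>green_field u A B l m e\<close>, \<open>e \<in> Basis\<close>, are the components of a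
  compactly supported vector field with divergence \<open>\<Sum>e\<in>Basis. green_field_deriv u A B l m e\<close>.
  Since \<open>\<Delta>u = 0\<close>, the second-order terms cancel and the divergence is \<open>ramp A B (x \<bullet> x)\<close> times a
  radial Wronskian of the dilates \<open>u (l *\<^sub>R x)\<close> and \<open>u (m *\<^sub>R x)\<close>; its integral vanishes.\<close>

definition green_field :: "('a::euclidean_space \<Rightarrow> real) \<Rightarrow> real \<Rightarrow> real \<Rightarrow> real \<Rightarrow> real \<Rightarrow> 'a \<Rightarrow> 'a \<Rightarrow> real"
  where "green_field u A B l m e x = ramp_primitive A B (x \<bullet> x) * scaled_wronskian u l m e x"

definition green_field_deriv ::
    "('a::euclidean_space \<Rightarrow> real) \<Rightarrow> real \<Rightarrow> real \<Rightarrow> real \<Rightarrow> real \<Rightarrow> 'a \<Rightarrow> 'a \<Rightarrow> real"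
  where "green_field_deriv u A B l m e x =
    ramp A B (x \<bullet> x) * (x \<bullet> e) * scaled_wronskian u l m e x
    + ramp_primitive A B (x \<bullet> x) * (l\<^sup>2 * partial_deriv (partial_deriv u e) e (l *\<^sub>R x) * u (m *\<^sub>R x)
      - m\<^sup>2 * u (l *\<^sub>R x) * partial_deriv (partial_deriv u e) e (m *\<^sub>R x))"

context
  fixes u :: "'a::euclidean_space \<Rightarrow> real" and r A B l m :: real
  assumes harm: "harmonic_on (ball 0 r) u" and r: "0 < r" and AB: "-1 < A" "A < B" "B < 1"
    and lm: "\<bar>l\<bar> \<le> r" "\<bar>m\<bar> \<le> r"
begin

lemma green_field_vanishing:
  assumes "B < x \<bullet> x"
  shows "green_field u A B l m e x = 0" "green_field_deriv u A B l m e x = 0"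
  using assms ramp_primitive_eq_0[of A B "x \<bullet> x"] ramp_eq_0[of A B "x \<bullet> x"] AB
  by (auto simp: green_field_def green_field_deriv_def)

lemma continuous_on_green_field:
  assumes "e \<in> Basis"
  shows "continuous_on UNIV (green_field u A B l m e)" "continuous_on UNIV (green_field_deriv u A B l m e)"
proof -
  have scaled: "continuous_on (ball 0 1) (\<lambda>x. f (l *\<^sub>R x))" "continuous_on (ball 0 1) (\<lambda>x. f (m *\<^sub>R x))"
    if "continuous_on (ball 0 r) f" for f :: "'a \<Rightarrow> real"
    using continuous_on_compose_scaleR_ball'[OF that r] lm by auto
  have "continuous_on UNIV (\<lambda>x::'a. ramp_primitive A B (x \<bullet> x))"
    by (rule continuous_on_compose2[OF continuous_on_ramp_primitive])
       (auto intro!: continuous_intros intro: less_le_trans[OF _ inner_ge_zero])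
  moreover have "continuous_on UNIV (\<lambda>x::'a. ramp A B (x \<bullet> x))"
    by (rule continuous_on_compose2[OF continuous_on_ramp]) (auto intro!: continuous_intros)
  ultimately have "continuous_on (ball 0 1) (green_field u A B l m e)"
    "continuous_on (ball 0 1) (green_field_deriv u A B l m e)"
    using scaled[OF harmonic_onD(3)[OF harm]] scaled[OF harmonic_onD(4)[OF harm assms]]
      scaled[OF harmonic_onD(5)[OF harm assms]]
    unfolding green_field_def green_field_deriv_def scaled_wronskian_def
    by (auto intro!: continuous_intros elim: continuous_on_subset)
  then show "continuous_on UNIV (green_field u A B l m e)" "continuous_on UNIV (green_field_deriv u A B l m e)"
    by (auto intro!: continuous_on_UNIV_if_supported_in_ball[OF _ _ AB(3)] green_field_vanishing)
qed

lemma has_real_derivative_green_field: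
  assumes "e \<in> Basis"
  shows "((\<lambda>t. green_field u A B l m e (x + t *\<^sub>R e)) has_real_derivative green_field_deriv u A B l m e x) (at 0)"
proof (cases "x \<in> ball 0 1")
  case True
  have diff: "u differentiable (at y)" "partial_deriv u e differentiable (at y)" if "y \<in> ball 0 r" for y
    using harmonic_onD(1,2)[OF harm] that assms by (auto simp: differentiable_on_eq_differentiable_at)
  have "l *\<^sub>R x \<in> ball 0 r" "m *\<^sub>R x \<in> ball 0 r"
    using scaleR_in_ball[OF True _ r] lm by auto
  from DERIV_mult[OF has_real_derivative_ramp_primitive_line
      has_real_derivative_scaled_wronskian[OF diff[OF this(1)] diff[OF this(2)]]]
  show ?thesis
    unfolding green_field_def green_field_deriv_def by (rule DERIV_cong) (simp add: algebra_simps)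
next
  case False
  then have x: "B < x \<bullet> x"
    by (rule inner_self_gt_if_notin_ball[OF _ AB(3)])
  define S where "S = {t::real. B < (x + t *\<^sub>R e) \<bullet> (x + t *\<^sub>R e)}"
  have "open S"
    unfolding S_def by (rule open_Collect_less) (auto intro!: continuous_intros)
  moreover have "0 \<in> S" using x by (simp add: S_def)
  ultimately have "((\<lambda>t. green_field u A B l m e (x + t *\<^sub>R e)) has_real_derivative 0) (at 0)"
    by (rule has_field_derivative_transform_within_open[OF DERIV_const]) (simp add: S_def green_field_vanishing)
  then show ?thesis
    by (simp add: green_field_vanishing[OF x])
qed

lemma sum_Basis_green_field_deriv:
  "(\<Sum>e\<in>Basis. green_field_deriv u A B l m e x) = ramp A B (x \<bullet> x) *
     (l * directional_deriv u (l *\<^sub>R x) x * u (m *\<^sub>R x) - m * u (l *\<^sub>R x) * directional_deriv u (m *\<^sub>R x) x)"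
proof (cases "x \<in> ball 0 1")
  case True
  then have "l *\<^sub>R x \<in> ball 0 r" "m *\<^sub>R x \<in> ball 0 r"
    using scaleR_in_ball[OF True _ r] lm by auto
  note laplace = harmonic_onD(6)[OF harm this(1)] harmonic_onD(6)[OF harm this(2)]
  have "(\<Sum>e\<in>Basis. green_field_deriv u A B l m e x) =
      ramp A B (x \<bullet> x) * (\<Sum>e\<in>Basis. (x \<bullet> e) * scaled_wronskian u l m e x)
      + ramp_primitive A B (x \<bullet> x) *
        (l\<^sup>2 * (\<Sum>e\<in>Basis. partial_deriv (partial_deriv u e) e (l *\<^sub>R x)) * u (m *\<^sub>R x)
         - m\<^sup>2 * u (l *\<^sub>R x) * (\<Sum>e\<in>Basis. partial_deriv (partial_deriv u e) e (m *\<^sub>R x)))"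
    by (simp add: green_field_deriv_def sum.distrib sum_subtractf sum_distrib_left sum_distrib_right
        right_diff_distrib mult.assoc)
  then show ?thesis
    by (simp add: laplace sum_Basis_scaled_wronskian)
next
  case False
  then show ?thesis
    using green_field_vanishing inner_self_gt_if_notin_ball[OF False AB(3)] ramp_eq_0[OF AB(2)] by simp
qed

lemma integral_ramp_radial_wronskian_eq_0:
  "integral UNIV (\<lambda>x. ramp A B (x \<bullet> x) *
      (l * directional_deriv u (l *\<^sub>R x) x * u (m *\<^sub>R x) - m * u (l *\<^sub>R x) * directional_deriv u (m *\<^sub>R x) x))
   = 0"
proof -
  have outside: "B < x \<bullet> x" if "x \<notin> cball 0 1" for x :: 'a
    using that by (intro inner_self_gt_if_notin_ball[OF _ AB(3)]) auto
  have "(green_field_deriv u A B l m e has_integral 0) UNIV" if "e \<in> Basis" for e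
    using integral_directional_derivative_eq_0[OF has_real_derivative_green_field[OF that]
        continuous_on_green_field[OF that], of 1]
      has_integral_integral_compact_support[OF continuous_on_green_field(2)[OF that], of 1]
      green_field_vanishing[OF outside]
    by auto
  then have "((\<lambda>x. \<Sum>e\<in>Basis. green_field_deriv u A B l m e x) has_integral (\<Sum>e\<in>(Basis :: 'a set). 0)) UNIV"
    by (intro has_integral_sum finite_Basis)
  then show ?thesis
    by (simp add: sum_Basis_green_field_deriv integral_unique)
qed

end

section \<open>Weighted pairings of dilates of a harmonic function\<close>

definition ramp_pairing :: "('a::euclidean_space \<Rightarrow> real) \<Rightarrow> real \<Rightarrow> real \<Rightarrow> real \<Rightarrow> real \<Rightarrow> real" where
  "ramp_pairing u A B l m = integral UNIV (\<lambda>x. ramp A B (x \<bullet> x) * u (l *\<^sub>R x) * u (m *\<^sub>R x))"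

context
  fixes u :: "'a::euclidean_space \<Rightarrow> real" and r A B :: real
  assumes harm: "harmonic_on (ball 0 r) u" and r: "0 < r" and AB: "-1 < A" "A < B" "B < 1"
begin

lemma ramp_pairing_integrand_vanishing:
  "x \<notin> cball 0 1 \<Longrightarrow> ramp A B (x \<bullet> x) * u (l *\<^sub>R x) * u (m *\<^sub>R x) = 0"
  using ramp_eq_0[OF AB(2)] inner_self_gt_if_notin_ball[OF _ AB(3), of x] by simp

lemma continuous_on_ramp_pairing_integrand:
  assumes "\<bar>l\<bar> \<le> r" "\<bar>m\<bar> \<le> r"
  shows "continuous_on UNIV (\<lambda>x. ramp A B (x \<bullet> x) * u (l *\<^sub>R x) * u (m *\<^sub>R x))"
proof (rule continuous_on_UNIV_if_supported_in_ball[OF _ _ AB(3)])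
  have "continuous_on (ball (0::'a) 1) (\<lambda>x. ramp A B (x \<bullet> x))"
    by (rule continuous_on_compose2[OF continuous_on_ramp]) (auto intro!: continuous_intros)
  then show "continuous_on (ball 0 1) (\<lambda>x. ramp A B (x \<bullet> x) * u (l *\<^sub>R x) * u (m *\<^sub>R x))"
    using continuous_on_compose_scaleR_ball'[OF harmonic_onD(3)[OF harm] r] assms
    by (intro continuous_on_mult) auto
qed (use ramp_eq_0[OF AB(2)] in auto)

lemma has_integral_ramp_pairing:
  assumes "\<bar>l\<bar> \<le> r" "\<bar>m\<bar> \<le> r"
  shows "((\<lambda>x. ramp A B (x \<bullet> x) * u (l *\<^sub>R x) * u (m *\<^sub>R x)) has_integral ramp_pairing u A B l m) UNIV"
  unfolding ramp_pairing_def
  by (rule has_integral_integral_compact_support[OF continuous_on_ramp_pairing_integrand[OF assms]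
        ramp_pairing_integrand_vanishing])

lemma ramp_pairing_nonneg: "\<bar>l\<bar> \<le> r \<Longrightarrow> 0 \<le> ramp_pairing u A B l l"
  by (rule has_integral_nonneg[OF has_integral_ramp_pairing]) (auto simp: mult.assoc ramp_nonneg)

lemma ramp_pairing_Cauchy_Schwarz:
  assumes "\<bar>l\<bar> \<le> r" "\<bar>m\<bar> \<le> r"
  shows "(ramp_pairing u A B l m)\<^sup>2 \<le> ramp_pairing u A B l l * ramp_pairing u A B m m"
proof (rule quadratic_nonneg_imp_discriminant_le[OF _ ramp_pairing_nonneg[OF assms(2)]])
  fix t :: real
  have "((\<lambda>x. ramp A B (x \<bullet> x) * u (l *\<^sub>R x) * u (l *\<^sub>R x)
            + (2 * t) * (ramp A B (x \<bullet> x) * u (l *\<^sub>R x) * u (m *\<^sub>R x))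
            + t\<^sup>2 * (ramp A B (x \<bullet> x) * u (m *\<^sub>R x) * u (m *\<^sub>R x))) has_integral
        ramp_pairing u A B l l + (2 * t) * ramp_pairing u A B l m + t\<^sup>2 * ramp_pairing u A B m m) UNIV"
    by (intro has_integral_add has_integral_mult_right has_integral_ramp_pairing assms)
  moreover have "0 \<le> ramp A B (x \<bullet> x) * u (l *\<^sub>R x) * u (l *\<^sub>R x)
            + (2 * t) * (ramp A B (x \<bullet> x) * u (l *\<^sub>R x) * u (m *\<^sub>R x))
            + t\<^sup>2 * (ramp A B (x \<bullet> x) * u (m *\<^sub>R x) * u (m *\<^sub>R x))" for x :: 'a
  proof -
    have "0 \<le> ramp A B (x \<bullet> x) * (u (l *\<^sub>R x) + t * u (m *\<^sub>R x))\<^sup>2"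
      by (simp add: ramp_nonneg)
    then show ?thesis by (simp add: power2_eq_square algebra_simps)
  qed
  ultimately show "0 \<le> ramp_pairing u A B l l + 2 * t * ramp_pairing u A B l m + t\<^sup>2 * ramp_pairing u A B m m"
    by (simp add: has_integral_nonneg)
qed

lemma has_real_derivative_ramp_pairing:
  assumes U: "convex U" "\<tau>0 \<in> U"
    and a: "\<And>\<tau>. \<tau> \<in> U \<Longrightarrow> (a has_real_derivative a' \<tau>) (at \<tau> within U)"
      "continuous_on U a'" "\<And>\<tau>. \<tau> \<in> U \<Longrightarrow> \<bar>a \<tau>\<bar> \<le> r"
    and b: "\<And>\<tau>. \<tau> \<in> U \<Longrightarrow> (b has_real_derivative b' \<tau>) (at \<tau> within U)"
      "continuous_on U b'" "\<And>\<tau>. \<tau> \<in> U \<Longrightarrow> \<bar>b \<tau>\<bar> \<le> r"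
  shows "((\<lambda>\<tau>. ramp_pairing u A B (a \<tau>) (b \<tau>)) has_real_derivative
     integral UNIV (\<lambda>x. ramp A B (x \<bullet> x) * (a' \<tau>0 * directional_deriv u (a \<tau>0 *\<^sub>R x) x * u (b \<tau>0 *\<^sub>R x)
        + u (a \<tau>0 *\<^sub>R x) * (b' \<tau>0 * directional_deriv u (b \<tau>0 *\<^sub>R x) x)))) (at \<tau>0 within U)"
  unfolding ramp_pairing_def
  by (rule has_real_derivative_weighted_pairing[OF harmonic_onD(1,4)[OF harm] r continuous_on_ramp _ AB(3)
        a b U])
     (use ramp_eq_0[OF AB(2)] in auto)

text \<open>Along l = c e^t, m = c e^-t the derivative of the pairing is the integral of the radial
  Wronskian, which vanishes.\<close>

lemma ramp_pairing_eq_geometric_mean: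
  assumes l: "0 < l" "l \<le> r" and m: "0 < m" "m \<le> r"
  shows "ramp_pairing u A B l m = ramp_pairing u A B (sqrt (l * m)) (sqrt (l * m))"
proof -
  define c where "c = sqrt (l * m)"
  have "0 < c" using l m by (simp add: c_def)
  define t0 where "t0 = ln (l / c)"
  have l_eq: "c * exp t0 = l" using \<open>0 < c\<close> l by (simp add: t0_def)
  have m_eq: "c * exp (- t0) = m"
    using \<open>0 < c\<close> l m by (simp add: t0_def exp_minus c_def field_simps flip: real_sqrt_mult)
  define U where "U = {-\<bar>t0\<bar>..\<bar>t0\<bar>}"
  have bound: "\<bar>c * exp t\<bar> \<le> r" "\<bar>c * exp (- t)\<bar> \<le> r" if "t \<in> U" for t
  proof -
    have "c * exp s \<le> r" if "\<bar>s\<bar> \<le> \<bar>t0\<bar>" for s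
    proof -
      have "c * exp s \<le> c * exp \<bar>t0\<bar>" using that \<open>0 < c\<close> by simp
      also have "\<dots> \<le> r" using l_eq m_eq l m by (cases "0 \<le> t0") auto
      finally show ?thesis .
    qed
    then show "\<bar>c * exp t\<bar> \<le> r" "\<bar>c * exp (- t)\<bar> \<le> r"
      using that \<open>0 < c\<close> by (auto simp: U_def)
  qed
  have deriv_0: "((\<lambda>t. ramp_pairing u A B (c * exp t) (c * exp (- t))) has_real_derivative 0)
      (at t within U)" if "t \<in> U" for t
  proof -
    have "integral UNIV (\<lambda>x. ramp A B (x \<bullet> x) *
          (c * exp t * directional_deriv u ((c * exp t) *\<^sub>R x) x * u ((c * exp (- t)) *\<^sub>R x)
           + u ((c * exp t) *\<^sub>R x) * (- (c * exp (- t)) * directional_deriv u ((c * exp (- t)) *\<^sub>R x) x)))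
        = 0"
      using integral_ramp_radial_wronskian_eq_0[OF harm r AB bound[OF that]]
      by (simp add: algebra_simps)
    moreover have "((\<lambda>t. ramp_pairing u A B (c * exp t) (c * exp (- t))) has_real_derivative
        integral UNIV (\<lambda>x. ramp A B (x \<bullet> x) *
          (c * exp t * directional_deriv u ((c * exp t) *\<^sub>R x) x * u ((c * exp (- t)) *\<^sub>R x)
           + u ((c * exp t) *\<^sub>R x) * (- (c * exp (- t)) * directional_deriv u ((c * exp (- t)) *\<^sub>R x) x))))
        (at t within U)"
      by (rule has_real_derivative_ramp_pairing)
         (use that bound in \<open>auto simp: U_def intro!: derivative_eq_intros continuous_intros\<close>)
    ultimately show ?thesis by simp
  qed
  have "convex U" by (simp add: U_def)
  then obtain k where "\<forall>t\<in>U. ramp_pairing u A B (c * exp t) (c * exp (- t)) = k"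
    using has_field_derivative_zero_constant[OF _ deriv_0] by blast
  moreover have "t0 \<in> U" "0 \<in> U" by (auto simp: U_def)
  ultimately show ?thesis
    using l_eq m_eq by (metis c_def exp_zero minus_zero mult.right_neutral)
qed

lemma continuous_on_ramp_pairing_diagonal: "continuous_on {0<..r} (\<lambda>s. ramp_pairing u A B s s)"
proof -
  have "continuous (at s within {0<..r}) (\<lambda>s. ramp_pairing u A B s s)" if "s \<in> {0<..r}" for s
    by (rule DERIV_continuous, rule has_real_derivative_ramp_pairing[where a = "\<lambda>s. s" and b = "\<lambda>s. s"
          and a' = "\<lambda>_. 1" and b' = "\<lambda>_. 1"])
       (use that in \<open>auto intro!: derivative_eq_intros\<close>)
  then show ?thesis
    by (simp add: continuous_on_eq_continuous_within)
qed


lemma ramp_pairing_diagonal_log_convex: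
  assumes r1: "0 < r1" "r1 \<le> r" and \<theta>: "0 < \<theta>" "\<theta> < 1"
  defines "s \<equiv> r1 powr (1 - \<theta>) * r powr \<theta>"
  shows "ramp_pairing u A B s s \<le> ramp_pairing u A B r1 r1 powr (1 - \<theta>) * ramp_pairing u A B r r powr \<theta>"
proof -
  define p where "p q = r1 powr (1 - q) * r powr q" for q
  define G where "G q = ramp_pairing u A B (p q) (p q)" for q
  have p_in: "p q \<in> {0<..r}" if "q \<in> {0..1}" for q
  proof -
    have "p q \<le> r powr (1 - q) * r powr q"
      unfolding p_def using that r1 by (intro mult_right_mono powr_mono2) auto
    then show ?thesis using r r1 by (simp add: p_def flip: powr_add)
  qed
  have "continuous_on {0..1} G"
    unfolding G_def
    by (rule continuous_on_compose2[OF continuous_on_ramp_pairing_diagonal])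
       (use p_in r r1 in \<open>auto simp: p_def intro!: continuous_intros\<close>)
  moreover have "0 \<le> G q" if "q \<in> {0..1}" for q
    unfolding G_def using p_in[OF that] by (intro ramp_pairing_nonneg) auto
  moreover have "G ((q1 + q2) / 2) ^ 2 \<le> G q1 * G q2" if "q1 \<in> {0..1}" "q2 \<in> {0..1}" for q1 q2
  proof -
    have "p ((q1 + q2) / 2) = sqrt (p q1 * p q2)"
    proof (rule real_sqrt_unique[symmetric])
      show "(p ((q1 + q2) / 2))\<^sup>2 = p q1 * p q2"
        using r r1 by (simp add: p_def power2_eq_square algebra_simps flip: powr_add)
    qed (use r r1 in \<open>simp add: p_def\<close>)
    then have "G ((q1 + q2) / 2) = ramp_pairing u A B (p q1) (p q2)"
      using ramp_pairing_eq_geometric_mean p_in[OF that(1)] p_in[OF that(2)] by (simp add: G_def)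
    then show ?thesis
      using ramp_pairing_Cauchy_Schwarz p_in[OF that(1)] p_in[OF that(2)] by (simp add: G_def)
  qed
  ultimately have "G \<theta> \<le> G 0 powr (1 - \<theta>) * G 1 powr \<theta>"
    by (rule midpoint_log_convex_imp_log_convex[OF _ _ _ \<theta>])
  then show ?thesis
    using r r1 by (simp add: G_def p_def s_def)
qed


lemma has_integral_ramp_pairing_rescaled:
  assumes "0 < s" "s \<le> r"
  shows "((\<lambda>y. ramp A B ((y /\<^sub>R s) \<bullet> (y /\<^sub>R s)) * (u y)\<^sup>2) has_integral s ^ DIM('a) * ramp_pairing u A B s s) UNIV"
    and "continuous_on UNIV (\<lambda>y. ramp A B ((y /\<^sub>R s) \<bullet> (y /\<^sub>R s)) * (u y)\<^sup>2)"
proof -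
  define F where "F x = ramp A B (x \<bullet> x) * u (s *\<^sub>R x) * u (s *\<^sub>R x)" for x :: 'a
  have s: "\<bar>s\<bar> \<le> r" using assms by simp
  have F_cont: "continuous_on UNIV F"
    unfolding F_def by (rule continuous_on_ramp_pairing_integrand[OF s s])
  have F_vanish: "F x = 0" if "x \<notin> cball 0 1" for x
    unfolding F_def by (rule ramp_pairing_integrand_vanishing[OF that])
  have F_eq: "F (y /\<^sub>R s) = ramp A B ((y /\<^sub>R s) \<bullet> (y /\<^sub>R s)) * (u y)\<^sup>2" for y
    using assms by (simp add: F_def power2_eq_square)
  have "((\<lambda>y. F (inverse s *\<^sub>R y + 0)) has_integral integral UNIV F / \<bar>inverse s\<bar> ^ DIM('a)) UNIV"
    using assms by (intro has_integral_affinity_compact_support[OF F_cont F_vanish]) simp_all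
  moreover have "integral UNIV F / \<bar>inverse s\<bar> ^ DIM('a) = s ^ DIM('a) * ramp_pairing u A B s s"
    using assms by (simp add: F_def[abs_def] ramp_pairing_def power_inverse divide_inverse mult.commute)
  ultimately have "((\<lambda>y. F (y /\<^sub>R s)) has_integral s ^ DIM('a) * ramp_pairing u A B s s) UNIV"
    by simp
  then show "((\<lambda>y. ramp A B ((y /\<^sub>R s) \<bullet> (y /\<^sub>R s)) * (u y)\<^sup>2) has_integral
      s ^ DIM('a) * ramp_pairing u A B s s) UNIV"
    by (simp only: F_eq)
  have "continuous_on UNIV (\<lambda>y. F (y /\<^sub>R s))"
    by (rule continuous_on_compose2[OF F_cont]) (auto intro!: continuous_intros)
  then show "continuous_on UNIV (\<lambda>y. ramp A B ((y /\<^sub>R s) \<bullet> (y /\<^sub>R s)) * (u y)\<^sup>2)"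
    by (simp add: F_eq)
qed


lemma ramp_pairing_three_ball:
  assumes r123: "0 < r1" "r1 < r2" "r2 < r"
  defines "\<alpha> \<equiv> (ln r - ln r2) / (ln r - ln r1)"
  shows "r2 ^ DIM('a) * ramp_pairing u A B r2 r2
    \<le> (r1 ^ DIM('a) * ramp_pairing u A B r1 r1) powr \<alpha> * (r ^ DIM('a) * ramp_pairing u A B r r) powr (1 - \<alpha>)"
proof -
  have "0 < \<alpha>" "\<alpha> < 1"
    using r123 by (auto simp: \<alpha>_def divide_less_eq)
  have interp: "r1 powr \<alpha> * r powr (1 - \<alpha>) = r2"
    unfolding \<alpha>_def using r123 by (intro powr_log_interpolation) auto
  have "ramp_pairing u A B r2 r2 \<le> ramp_pairing u A B r1 r1 powr \<alpha> * ramp_pairing u A B r r powr (1 - \<alpha>)"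
    using ramp_pairing_diagonal_log_convex[of r1 "1 - \<alpha>"] r123 \<open>0 < \<alpha>\<close> \<open>\<alpha> < 1\<close> interp by simp
  moreover have "r2 ^ DIM('a) = (r1 ^ DIM('a)) powr \<alpha> * (r ^ DIM('a)) powr (1 - \<alpha>)"
    using r123 by (simp add: interp[symmetric] power_mult_distrib powr_power powr_powr mult.commute
        flip: powr_realpow)
  ultimately show ?thesis
    using r123 ramp_pairing_nonneg[of r1] ramp_pairing_nonneg[of r]
    by (simp add: powr_mult mult_left_mono)
qed

end

section \<open>The three-ball inequality\<close>

lemma ramp_pairing_tendsto_ball_integral:
  fixes u :: "'a::euclidean_space \<Rightarrow> real" and A B :: "nat \<Rightarrow> real"
  assumes harm: "harmonic_on (ball 0 r) u" and sq_int: "set_integrable lborel (ball 0 r) (\<lambda>x. (u x)\<^sup>2)"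
    and s: "0 < s" "s \<le> r"
    and AB: "\<And>k. -1 < A k" "\<And>k. A k < B k" "\<And>k. B k < 1" and A_lim: "A \<longlonglongrightarrow> 1"
  shows "(\<lambda>k. s ^ DIM('a) * ramp_pairing u (A k) (B k) s s) \<longlonglongrightarrow> (LINT x:ball 0 s|lborel. (u x)\<^sup>2)"
proof -
  define f where "f k y = ramp (A k) (B k) ((y /\<^sub>R s) \<bullet> (y /\<^sub>R s)) * (u y)\<^sup>2" for k y
  define w where "w y = indicator (ball 0 r) y *\<^sub>R (u y)\<^sup>2" for y :: 'a
  note rescaled = has_integral_ramp_pairing_rescaled[OF harm _ AB s]
  have w_int: "integrable lborel w"
    using sq_int unfolding set_integrable_def w_def .
  have f_meas: "f k \<in> borel_measurable lborel" for k
    unfolding f_def[abs_def] using borel_measurable_continuous_onI[OF rescaled(2)] s by simp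
  have bound: "norm (f k y) \<le> w y" for k y
  proof (cases "y \<in> ball 0 s")
    case True
    then have "y \<in> ball 0 r" using s by auto
    then show ?thesis
      using ramp_nonneg ramp_le_1 by (simp add: f_def w_def abs_mult mult_left_le_one_le)
  next
    case False
    then show ?thesis
      using ramp_rescaled_eq_0[OF False s(1) AB(2,3)] by (simp add: f_def w_def)
  qed
  have "integrable lborel (f k)" for k
    by (rule Bochner_Integration.integrable_bound[OF w_int f_meas])
       (intro AE_I2, rule order_trans[OF bound], simp)
  then have "s ^ DIM('a) * ramp_pairing u (A k) (B k) s s = integral\<^sup>L lborel (f k)" for k
    using has_integral_unique[OF rescaled(1) has_integral_integral_lborel] s by (simp add: f_def[abs_def])
  moreover have "(\<lambda>k. f k y) \<longlonglongrightarrow> indicator (ball 0 s) y * (u y)\<^sup>2" for y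
    unfolding f_def by (intro tendsto_mult_right ramp_rescaled_tendsto_indicator s(1) AB(2,3) A_lim)
  moreover have "integrable lborel (\<lambda>y. indicator (ball 0 s) y *\<^sub>R (u y)\<^sup>2)"
    using set_integrable_subset[OF sq_int _ subset_ball[OF s(2)]] unfolding set_integrable_def by auto
  ultimately show ?thesis
    using bound unfolding set_lebesgue_integral_def
    by (auto intro!: integral_dominated_convergence[OF borel_measurable_integrable f_meas w_int] AE_I2)
qed

lemma L2_ball_three_ball_inequality:
  fixes u :: "'a::euclidean_space \<Rightarrow> real"
  assumes harm: "harmonic_on (ball 0 r3) u" and sq_int: "set_integrable lborel (ball 0 r3) (\<lambda>x. (u x)\<^sup>2)"
    and r: "0 < r1" "r1 < r2" "r2 < r3"
  defines "\<alpha> \<equiv> (ln r3 - ln r2) / (ln r3 - ln r1)"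
  shows "L2_ball u r2 \<le> L2_ball u r1 powr \<alpha> * L2_ball u r3 powr (1 - \<alpha>)"
proof -
  have \<alpha>: "0 < \<alpha>" "\<alpha> < 1" using r by (auto simp: \<alpha>_def divide_less_eq)
  define A where "A k = 1 - inverse (real (Suc k))" for k
  define B where "B k = 1 - inverse (2 * real (Suc k))" for k
  have AB: "-1 < A k" "A k < B k" "B k < 1" for k
    by (auto simp: A_def B_def field_simps)
  have "A \<longlonglongrightarrow> 1"
    unfolding A_def using tendsto_diff[OF tendsto_const LIMSEQ_inverse_real_of_nat] by simp
  define I where "I s = (LINT x:ball 0 s|lborel. (u x)\<^sup>2)" for s
  define W where "W k s = s ^ DIM('a) * ramp_pairing u (A k) (B k) s s" for k s
  have W_lim: "(\<lambda>k. W k s) \<longlonglongrightarrow> I s" if "0 < s" "s \<le> r3" for s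
    unfolding W_def I_def by (rule ramp_pairing_tendsto_ball_integral[OF harm sq_int that AB \<open>A \<longlonglongrightarrow> 1\<close>])
  have W_nonneg: "0 \<le> W k s" if "0 < s" "s \<le> r3" for k s
    using ramp_pairing_nonneg[OF harm _ AB(1-3), of s] that by (simp add: W_def)
  have I_nonneg: "0 \<le> I r1" "0 \<le> I r3"
    using LIMSEQ_le_const[OF W_lim] W_nonneg r by auto
  have W_ineq: "W k r2 \<le> W k r1 powr \<alpha> * W k r3 powr (1 - \<alpha>)" for k
    unfolding W_def \<alpha>_def using r by (intro ramp_pairing_three_ball[OF harm _ AB]) auto
  have "(\<lambda>k. W k r1 powr \<alpha> * W k r3 powr (1 - \<alpha>)) \<longlonglongrightarrow> I r1 powr \<alpha> * I r3 powr (1 - \<alpha>)"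
    using \<alpha> W_nonneg r by (intro tendsto_mult tendsto_powr' W_lim tendsto_const) auto
  from LIMSEQ_le[OF W_lim this] W_ineq r have "I r2 \<le> I r1 powr \<alpha> * I r3 powr (1 - \<alpha>)"
    by auto
  then have "sqrt (I r2) \<le> sqrt (I r1 powr \<alpha>) * sqrt (I r3 powr (1 - \<alpha>))"
    by (simp only: real_sqrt_mult[symmetric] real_sqrt_le_iff)
  also have "\<dots> = sqrt (I r1) powr \<alpha> * sqrt (I r3) powr (1 - \<alpha>)"
    using I_nonneg by (simp add: powr_half_sqrt[symmetric] powr_powr mult.commute)
  finally have "sqrt (I r2) \<le> sqrt (I r1) powr \<alpha> * sqrt (I r3) powr (1 - \<alpha>)" .
  then show ?thesis
    by (simp add: L2_ball_def I_def)
qed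

section \<open>Optimality of the exponent\<close>

lemma ball_integral_square_homogeneous:
  fixes f :: "'a::euclidean_space \<Rightarrow> real"
  assumes fc: "continuous_on UNIV f" and hom: "\<And>x. f (r *\<^sub>R x) = r ^ k * f x" and r: "0 < r"
  shows "(LINT x:ball 0 r|lborel. (f x)^2) = r ^ (2 * k + DIM('a)) * (LINT x:ball 0 1|lborel. (f x)^2)"
proof -
  have fm[measurable]: "f \<in> borel_measurable borel" by (rule borel_measurable_continuous_onI[OF fc])
  define g where "g x = indicator (ball 0 r) x *\<^sub>R (f x)^2" for x :: 'a
  have f2m: "(\<lambda>x. (f x)^2) \<in> borel_measurable borel"
    by (rule borel_measurable_continuous_onI) (intro continuous_intros fc)
  have im: "(indicator (ball 0 r) :: 'a \<Rightarrow> real) \<in> borel_measurable borel"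
    by (rule borel_measurable_indicator) simp
  have gm[measurable]: "g \<in> borel_measurable borel" unfolding g_def by (rule borel_measurable_scaleR[OF im f2m])
  define T where "T x = 0 + r *\<^sub>R x" for x :: 'a
  have Tm[measurable]: "T \<in> borel_measurable borel" unfolding T_def
    by (rule borel_measurable_continuous_onI) (intro continuous_intros)
  have eq: "lborel = density (distr lborel borel T) (\<lambda>_. \<bar>r\<bar> ^ DIM('a))"
    unfolding T_def using lborel_affine[of r 0] r by simp
  have "integral\<^sup>L lborel g = integral\<^sup>L (density (distr lborel borel T) (\<lambda>_. \<bar>r\<bar> ^ DIM('a))) g"
    using arg_cong[of _ _ "\<lambda>M. integral\<^sup>L M g", OF eq] .
  also have "\<dots> = integral\<^sup>L (distr lborel borel T) (\<lambda>x. \<bar>r\<bar> ^ DIM('a) *\<^sub>R g x)"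
    by (rule integral_density) auto
  also have "\<dots> = integral\<^sup>L lborel (\<lambda>x. \<bar>r\<bar> ^ DIM('a) *\<^sub>R g (T x))"
    by (rule integral_distr) auto
  also have "\<dots> = integral\<^sup>L lborel (\<lambda>x. r ^ (2 * k + DIM('a)) * (indicator (ball 0 1) x *\<^sub>R (f x)^2))"
  proof (rule Bochner_Integration.integral_cong[OF refl])
    fix x :: 'a
    have i: "indicator (ball 0 r) (r *\<^sub>R x) = (indicator (ball 0 1) x :: real)"
      using r by (simp add: indicator_def)
    show "\<bar>r\<bar> ^ DIM('a) *\<^sub>R g (T x) = r ^ (2 * k + DIM('a)) * (indicator (ball 0 1) x *\<^sub>R (f x)^2)"
      using r unfolding g_def T_def by (simp add: i hom power_mult_distrib power_add power_mult algebra_simps)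
  qed
  also have "\<dots> = r ^ (2 * k + DIM('a)) * integral\<^sup>L lborel (\<lambda>x. indicator (ball 0 1) x *\<^sub>R (f x)^2)"
    by simp
  finally show ?thesis unfolding set_lebesgue_integral_def g_def .
qed

lemma ball_integral_square_pos:
  fixes f :: "'a::euclidean_space \<Rightarrow> real"
  assumes fc: "continuous_on UNIV f" and x0: "x0 \<in> ball 0 1" and f0: "f x0 \<noteq> 0"
  shows "0 < (LINT x:ball 0 1|lborel. (f x)^2)"
proof -
  have fm[measurable]: "f \<in> borel_measurable borel" by (rule borel_measurable_continuous_onI[OF fc])
  have "\<forall>e>0. \<exists>d>0. \<forall>x'. dist x' x0 < d \<longrightarrow> dist (f x') (f x0) < e"
    using fc unfolding continuous_on_iff by blast
  moreover have "0 < \<bar>f x0\<bar> / 2" using f0 by simp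
  ultimately obtain d where d: "0 < d" and dd: "\<And>x. dist x x0 < d \<Longrightarrow> dist (f x) (f x0) < \<bar>f x0\<bar> / 2"
    by blast
  define e where "e = min d (1 - norm x0)"
  have e: "0 < e" using d x0 by (auto simp: e_def)
  have sub: "ball x0 e \<subseteq> ball 0 1"
  proof
    fix x assume "x \<in> ball x0 e"
    then have "norm (x - x0) < 1 - norm x0" by (auto simp: e_def dist_norm norm_minus_commute)
    then show "x \<in> ball 0 1" using norm_triangle_ineq[of "x - x0" x0] by auto
  qed
  define m0 where "m0 = (f x0 / 2)^2"
  have m0: "0 < m0" using f0 by (simp add: m0_def)
  have low: "indicator (ball x0 e) x * m0 \<le> indicator (ball 0 1) x *\<^sub>R (f x)^2" for x
  proof (cases "x \<in> ball x0 e")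
    case True
    then have "dist x x0 < d" by (auto simp: e_def dist_commute)
    then have "\<bar>f x - f x0\<bar> < \<bar>f x0\<bar> / 2" using dd by (simp add: dist_real_def)
    then have "\<bar>f x0\<bar> / 2 \<le> \<bar>f x\<bar>" by linarith
    then have "(\<bar>f x0\<bar> / 2)^2 \<le> \<bar>f x\<bar>^2" by (rule power_mono) simp
    then have "m0 \<le> (f x)^2" by (simp add: m0_def power_divide)
    then show ?thesis using True sub by auto
  next
    case False
    then show ?thesis by simp
  qed
  have i1: "integrable lborel (\<lambda>x. indicator (ball x0 e) x * m0)"
    by (intro integrable_mult_left integrable_real_indicator) (use emeasure_lborel_ball_finite[of x0 e] in \<open>auto simp: top_unique\<close>)
  have ic: "integrable lborel (\<lambda>x. indicator (cball (0::'a) 1) x *\<^sub>R (f x)^2)"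
    by (rule borel_integrable_compact) (auto intro!: continuous_intros continuous_on_subset[OF fc])
  have i2: "integrable lborel (\<lambda>x. indicator (ball 0 1) x *\<^sub>R (f x)^2)"
    by (rule Bochner_Integration.integrable_bound[OF ic]) (auto intro!: AE_I2 simp: indicator_def)
  have "0 < measure lborel (ball x0 e) * m0" using content_ball_pos[OF e] m0 by simp
  also have "\<dots> = integral\<^sup>L lborel (\<lambda>x. indicator (ball x0 e) x * m0)" by simp
  also have "\<dots> \<le> integral\<^sup>L lborel (\<lambda>x. indicator (ball 0 1) x *\<^sub>R (f x)^2)"
    by (rule integral_mono[OF i1 i2 low])
  finally show ?thesis unfolding set_lebesgue_integral_def .
qed

lemma L2_ball_homogeneous:
  fixes f :: "'a::euclidean_space \<Rightarrow> real"
  assumes "continuous_on UNIV f" and "\<And>s x. 0 < s \<Longrightarrow> f (s *\<^sub>R x) = s ^ k * f x" and "0 < r"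
  shows "L2_ball f r = L2_ball f 1 * r powr (k + DIM('a) / 2)"
proof -
  have "(r powr (k + DIM('a) / 2))\<^sup>2 = r powr (real 2 * (k + DIM('a) / 2))"
    using \<open>0 < r\<close> by (intro powr_power) simp
  also have "real 2 * (k + DIM('a) / 2) = real (2 * k + DIM('a))"
    by simp
  also have "r powr real (2 * k + DIM('a)) = r ^ (2 * k + DIM('a))"
    using \<open>0 < r\<close> by (rule powr_realpow)
  finally have "r ^ (2 * k + DIM('a)) = (r powr (k + DIM('a) / 2))\<^sup>2" ..
  then show ?thesis
    using ball_integral_square_homogeneous[OF assms(1) assms(2)[OF \<open>0 < r\<close>] \<open>0 < r\<close>] \<open>0 < r\<close>
    by (simp add: L2_ball_def real_sqrt_mult)
qed

definition complex_coord :: "'a::euclidean_space \<Rightarrow> 'a \<Rightarrow> 'a \<Rightarrow> complex" where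
  "complex_coord e1 e2 x = complex_of_real (x \<bullet> e1) + \<i> * complex_of_real (x \<bullet> e2)"

lemma has_derivative_complex_coord: "(complex_coord e1 e2 has_derivative complex_coord e1 e2) (at x)"
proof -
  have "linear (complex_coord e1 e2)"
    by (rule linearI) (simp_all add: complex_coord_def inner_add_left algebra_simps scaleR_conv_of_real)
  then show ?thesis
    by (simp add: linear_conv_bounded_linear bounded_linear_imp_has_derivative)
qed

lemma complex_coord_scaleR: "complex_coord e1 e2 (s *\<^sub>R x) = complex_of_real s * complex_coord e1 e2 x"
  by (simp add: complex_coord_def algebra_simps)

lemma has_derivative_Re_complex_coord_power:
  "((\<lambda>x. Re (c * complex_coord e1 e2 x ^ j)) has_derivative
     (\<lambda>h. Re (c * (of_nat j * complex_coord e1 e2 h * complex_coord e1 e2 x ^ (j - 1))))) (at x)"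
  by (intro has_derivative_Re has_derivative_mult_right has_derivative_power has_derivative_complex_coord)

lemma partial_deriv_Re_complex_coord_power:
  "partial_deriv (\<lambda>x. Re (c * complex_coord e1 e2 x ^ j)) b =
     (\<lambda>x. Re ((c * of_nat j * complex_coord e1 e2 b) * complex_coord e1 e2 x ^ (j - 1)))"
proof
  fix x
  have "frechet_derivative (\<lambda>x. Re (c * complex_coord e1 e2 x ^ j)) (at x) =
      (\<lambda>h. Re (c * (of_nat j * complex_coord e1 e2 h * complex_coord e1 e2 x ^ (j - 1))))"
    by (rule frechet_derivative_at[OF has_derivative_Re_complex_coord_power, symmetric])
  then show "partial_deriv (\<lambda>x. Re (c * complex_coord e1 e2 x ^ j)) b x =
      Re ((c * of_nat j * complex_coord e1 e2 b) * complex_coord e1 e2 x ^ (j - 1))"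
    by (simp add: partial_deriv_def mult.assoc)
qed

lemma differentiable_on_Re_complex_coord_power:
  "(\<lambda>x. Re (c * complex_coord e1 e2 x ^ j)) differentiable_on S"
  by (rule differentiable_at_imp_differentiable_on) (rule differentiableI[OF has_derivative_Re_complex_coord_power])

lemma continuous_on_Re_complex_coord_power: "continuous_on S (\<lambda>x. Re (c * complex_coord e1 e2 x ^ j))"
  by (rule differentiable_imp_continuous_on[OF differentiable_on_Re_complex_coord_power])

lemma sum_Basis_complex_coord_square:
  assumes "e1 \<in> Basis" "e2 \<in> Basis" "e1 \<noteq> e2"
  shows "(\<Sum>b\<in>Basis. complex_coord e1 e2 b * complex_coord e1 e2 b) = 0"
proof (rule complex_eqI)
  have "Re (\<Sum>b\<in>Basis. complex_coord e1 e2 b * complex_coord e1 e2 b)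
      = (\<Sum>b\<in>Basis. (e1 \<bullet> b) * (e1 \<bullet> b)) - (\<Sum>b\<in>Basis. (e2 \<bullet> b) * (e2 \<bullet> b))"
    by (simp add: Re_sum complex_coord_def sum_subtractf inner_commute)
  also have "\<dots> = 0" using assms by (simp add: euclidean_inner[symmetric])
  finally show "Re (\<Sum>b\<in>Basis. complex_coord e1 e2 b * complex_coord e1 e2 b) = Re 0" by simp
  have "Im (\<Sum>b\<in>Basis. complex_coord e1 e2 b * complex_coord e1 e2 b) = 2 * (\<Sum>b\<in>Basis. (e1 \<bullet> b) * (e2 \<bullet> b))"
    by (simp add: Im_sum complex_coord_def sum_distrib_left inner_commute algebra_simps)
  also have "\<dots> = 2 * (e1 \<bullet> e2)" by (simp add: euclidean_inner[symmetric])
  also have "\<dots> = 0" using assms by (simp add: inner_Basis)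
  finally show "Im (\<Sum>b\<in>Basis. complex_coord e1 e2 b * complex_coord e1 e2 b) = Im 0" by simp
qed

lemma harmonic_on_Re_complex_coord_power:
  assumes "e1 \<in> Basis" "e2 \<in> Basis" "e1 \<noteq> e2"
  shows "harmonic_on UNIV (\<lambda>x. Re (complex_coord e1 e2 x ^ k))"
proof -
  let ?z = "complex_coord e1 e2"
  have "(\<lambda>x. Re (?z x ^ k)) = (\<lambda>x. Re (1 * ?z x ^ k))" by simp
  moreover have "harmonic_on UNIV (\<lambda>x. Re (1 * ?z x ^ k))"
    unfolding harmonic_on_def
  proof (intro conjI ballI)
    show "(\<lambda>x. Re (1 * ?z x ^ k)) differentiable_on UNIV"
      by (rule differentiable_on_Re_complex_coord_power)
    fix b :: 'a assume "b \<in> Basis"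
    show "partial_deriv (\<lambda>x. Re (1 * ?z x ^ k)) b differentiable_on UNIV"
      unfolding partial_deriv_Re_complex_coord_power by (rule differentiable_on_Re_complex_coord_power)
    fix c :: 'a assume "c \<in> Basis"
    show "continuous_on UNIV (partial_deriv (partial_deriv (\<lambda>x. Re (1 * ?z x ^ k)) b) c)"
      unfolding partial_deriv_Re_complex_coord_power by (rule continuous_on_Re_complex_coord_power)
  next
    fix x :: 'a
    have "laplacian (\<lambda>x. Re (1 * ?z x ^ k)) x
        = Re ((of_nat k * of_nat (k - 1) * ?z x ^ (k - 1 - 1)) * (\<Sum>b\<in>Basis. ?z b * ?z b))"
      unfolding laplacian_def partial_deriv_Re_complex_coord_power
      by (simp add: Re_sum sum_distrib_left algebra_simps)
    then show "laplacian (\<lambda>x. Re (1 * ?z x ^ k)) x = 0"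
      using sum_Basis_complex_coord_square[OF assms] by simp
  qed simp
  ultimately show ?thesis by simp
qed

lemma obtain_two_Basis:
  assumes "2 \<le> DIM('a)"
  obtains e1 e2 :: "'a::euclidean_space" where "e1 \<in> Basis" "e2 \<in> Basis" "e1 \<noteq> e2"
proof -
  obtain e1 :: 'a where "e1 \<in> Basis" using nonempty_Basis by blast
  moreover have "\<not> Basis \<subseteq> {e1}"
    using card_mono[of "{e1}" "Basis :: 'a set"] assms by auto
  ultimately show ?thesis using that by blast
qed

lemma L2_ball_Re_complex_coord_power:
  fixes e1 e2 :: "'a::euclidean_space" and k :: nat
  assumes "e1 \<in> Basis" "e2 \<in> Basis" "e1 \<noteq> e2"
  defines "u \<equiv> \<lambda>x. Re (complex_coord e1 e2 x ^ k)"
  shows "0 < L2_ball u 1" and "0 < s \<Longrightarrow> L2_ball u s = L2_ball u 1 * s powr (k + DIM('a) / 2)"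
proof -
  have u_cont: "continuous_on UNIV u"
    unfolding u_def using continuous_on_Re_complex_coord_power[of UNIV 1] by simp
  have "u (s *\<^sub>R x) = s ^ k * u x" for s x
    by (simp add: u_def complex_coord_scaleR power_mult_distrib flip: of_real_power)
  then show "0 < s \<Longrightarrow> L2_ball u s = L2_ball u 1 * s powr (k + DIM('a) / 2)"
    by (rule L2_ball_homogeneous[OF u_cont])
  have "u ((1 / 2) *\<^sub>R e1) = (1 / 2) ^ k"
    using assms by (simp add: u_def complex_coord_def inner_Basis flip: of_real_power)
  then show "0 < L2_ball u 1"
    unfolding L2_ball_def using assms(1)
    by (intro real_sqrt_gt_zero ball_integral_square_pos[OF u_cont, of "(1 / 2) *\<^sub>R e1"]) auto
qed

lemma three_ball_exponent_optimal:
  fixes r1 r2 r3 :: real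
  assumes dim: "2 \<le> DIM('a)" and r: "0 < r1" "r1 < r2" "r2 < r3"
    and \<alpha>': "(ln r3 - ln r2) / (ln r3 - ln r1) < \<alpha>'"
  obtains u :: "'a::euclidean_space \<Rightarrow> real"
  where "harmonic_on UNIV u" "C * L2_ball u r1 powr \<alpha>' * L2_ball u r3 powr (1 - \<alpha>') < L2_ball u r2"
proof -
  obtain e1 e2 :: 'a where e: "e1 \<in> Basis" "e2 \<in> Basis" "e1 \<noteq> e2"
    using obtain_two_Basis[OF dim] by blast
  define \<rho> where "\<rho> = r1 powr \<alpha>' * r3 powr (1 - \<alpha>')"
  have "0 < \<rho>" "\<rho> < r2"
    using r powr_log_interpolation_less[OF r \<alpha>'] by (simp_all add: \<rho>_def)
  then obtain k :: nat where k: "C < (r2 / \<rho>) ^ k"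
    using real_arch_pow[of "r2 / \<rho>" C] by auto
  define u where "u x = Re (complex_coord e1 e2 x ^ k)" for x
  define m where "m = k + DIM('a) / 2"
  note L2 = L2_ball_Re_complex_coord_power[OF e, where k = k, folded u_def m_def]
  have "C * L2_ball u r1 powr \<alpha>' * L2_ball u r3 powr (1 - \<alpha>') = C * (L2_ball u 1 * \<rho> powr m)"
    using r L2(1) by (simp add: L2(2)[where s = r1] L2(2)[where s = r3] \<rho>_def powr_interpolation_scaled mult.assoc)
  also have "\<dots> < (r2 / \<rho>) ^ k * (L2_ball u 1 * \<rho> powr m)"
    using k L2(1) \<open>0 < \<rho>\<close> by simp
  also have "\<dots> \<le> (r2 / \<rho>) powr m * (L2_ball u 1 * \<rho> powr m)"
  proof -
    have "(r2 / \<rho>) ^ k = (r2 / \<rho>) powr k"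
      using \<open>0 < \<rho>\<close> r by (simp add: powr_realpow)
    also have "\<dots> \<le> (r2 / \<rho>) powr m"
      using \<open>0 < \<rho>\<close> \<open>\<rho> < r2\<close> by (intro powr_mono) (auto simp: m_def)
    finally show ?thesis
      using L2(1) \<open>0 < \<rho>\<close> by (simp add: mult_right_mono)
  qed
  also have "\<dots> = L2_ball u r2"
    using r \<open>0 < \<rho>\<close> by (simp add: L2(2)[where s = r2] powr_divide)
  finally show ?thesis
    using harmonic_on_Re_complex_coord_power[OF e] that unfolding u_def[abs_def] by blast
qed

theorem theorem2p1:
  fixes r1 r2 r3 :: real
  assumes dim: "DIM('a::euclidean_space) = 2 \<or> DIM('a) = 3"
    and r: "0 < r1" "r1 < r2" "r2 < r3"
  defines "\<alpha> \<equiv> (ln r3 - ln r2) / (ln r3 - ln r1)"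
  shows "0 < \<alpha> \<and> \<alpha> < 1 \<and>
    (\<forall>u :: 'a \<Rightarrow> real. harmonic_on (ball 0 r3) u \<longrightarrow>
        set_integrable lborel (ball 0 r3) (\<lambda>x. (u x)^2) \<longrightarrow>
        L2_ball u r2 \<le> L2_ball u r1 powr \<alpha> * L2_ball u r3 powr (1 - \<alpha>)) \<and>
    \<not> (\<exists>\<alpha>' C. \<alpha>' > \<alpha> \<and> C > 0 \<and>
        (\<forall>u :: 'a \<Rightarrow> real. harmonic_on UNIV u \<longrightarrow>
           L2_ball u r2 \<le> C * L2_ball u r1 powr \<alpha>' * L2_ball u r3 powr (1 - \<alpha>')))"
proof (intro conjI allI impI notI)
  show "0 < \<alpha>" "\<alpha> < 1"
    using r by (auto simp: \<alpha>_def divide_less_eq)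
next
  fix u :: "'a \<Rightarrow> real"
  assume "harmonic_on (ball 0 r3) u" "set_integrable lborel (ball 0 r3) (\<lambda>x. (u x)^2)"
  then show "L2_ball u r2 \<le> L2_ball u r1 powr \<alpha> * L2_ball u r3 powr (1 - \<alpha>)"
    unfolding \<alpha>_def by (rule L2_ball_three_ball_inequality[OF _ _ r])
next
  assume "\<exists>\<alpha>' C. \<alpha>' > \<alpha> \<and> C > 0 \<and> (\<forall>u :: 'a \<Rightarrow> real. harmonic_on UNIV u \<longrightarrow>
      L2_ball u r2 \<le> C * L2_ball u r1 powr \<alpha>' * L2_ball u r3 powr (1 - \<alpha>'))"
  then obtain \<alpha>' C where "\<alpha> < \<alpha>'" and bound: "\<And>u :: 'a \<Rightarrow> real. harmonic_on UNIV u \<Longrightarrow>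
      L2_ball u r2 \<le> C * L2_ball u r1 powr \<alpha>' * L2_ball u r3 powr (1 - \<alpha>')"
    by blast
  have "2 \<le> DIM('a)" using dim by auto
  from three_ball_exponent_optimal[OF this r, of \<alpha>' C] \<open>\<alpha> < \<alpha>'\<close>
  obtain u :: "'a \<Rightarrow> real" where "harmonic_on UNIV u"
    "C * L2_ball u r1 powr \<alpha>' * L2_ball u r3 powr (1 - \<alpha>') < L2_ball u r2"
    unfolding \<alpha>_def by blast
  with bound show False by fastforce
qed

end
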